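(* Let $\mathcal B$ be a BMDP such that $Q^*(q,a)<\infty$ for every type $q$ and every $a\in A(q)$, and consider the Q-learning process with learning rates $\lambda_i\in[0,1]$ satisfying $\sum_{i=0}^\infty\lambda_i=\infty$ and $\sum_{i=0}^\infty\lambda_i^2<\infty$, and a fixed selection distribution with $p_{q,a}\ge p_{\min}>0$ for all pairs. Then for every initial vector $Q_0\ge\mathbf 0$, almost surely $\limsup_{i\to\infty}Q_i(q,a)\le Q^*(q,a)$ for all pairs $(q,a)$.
   Context: A branching Markov decision process (BMDP) is a tuple $\mathcal B=(\mathcal T,A,p,c)$ where $\mathcal T$ is a finite set of types, $A$ is a finite set of actions, $p:\mathcal T\times A\to \mathrm{Dist}(\mathcal T^* )$ is a partial function assigning to some pairs $(q,a)$ a probability distribution with finite support over the set $\mathcal T^*$ of finite lists of types, and $c:\mathcal T\times A\to\mathbb R_{>0}$ is a strictly positive cost function. $A(q)$ is the (nonempty) set of $a$ with $p(q,a)$ defined. For a list $\alpha$, $|\alpha|$ is its length and $\alpha_i$ its $i$-th element. The BMDP induces an MDP on lists of entities: an action $(i,a)$ with $a\in A(\alpha_i)$ replaces entity $\alpha_i$ of the current list by a list $\beta$ drawn from $p(\alpha_i,a)$ at cost $c(\alpha_i,a)$; the empty list is absorbing with no cost. $\mathbf c^*_q\in[0,\infty]$ is the infimum over all (history-dependent, randomized) strategies of the expected total cost starting from the single entity $q$. Define $Q^*(q,a)=c(q,a)+\sum_{\alpha\in\mathcal T^*}p(q,a)(\alpha)\sum_{j=1}^{|\alpha|}\mathbf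 c^*_{\alpha_j}$ (so $\mathbf c^*_q=\min_{a\in A(q)}Q^*(q,a)$). Q-learning process for a BMDP: Q-values are vectors $Q$ indexed by pairs $(q,a)$ with $q\in\mathcal T$, $a\in A(q)$. Given deterministic learning rates $\lambda_i\in[0,1]$, a fixed probability distribution $(p_{q,a})$ over pairs and an initial vector $Q_0\ge\mathbf 0$, at each step $i$ a pair $(q_i,a_i)$ is selected with probability $p_{q_i,a_i}$ independently of all previous randomness, a list $\beta^i$ is drawn from $p(q_i,a_i)$ independently, and $Q_{i+1}(q_i,a_i)=(1-\lambda_i)Q_i(q_i,a_i)+\lambda_i\big(c(q_i,a_i)+\sum_{j=1}^{|\beta^i|}\min_{a'\in A(\beta^i_j)}Q_i(\beta^i_j,a')\big)$, all other entries unchanged. *)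

theory Defs
  imports "HOL-Probability.Probability"
begin

text \<open>A BMDP is given by: a finite type of types 'q, a finite type of actions 'a,
  the enabled-action map Act (Act q = A(q), nonempty), the transition distributions
  p q a over lists of types (only meaningful for a in Act q), and the cost c.\<close>

definition bmdp :: "('q::finite \<Rightarrow> 'a::finite set) \<Rightarrow> ('q \<Rightarrow> 'a \<Rightarrow> 'q list pmf)
     \<Rightarrow> ('q \<Rightarrow> 'a \<Rightarrow> real) \<Rightarrow> bool" where
  "bmdp Act p c \<longleftrightarrow> (\<forall>q. Act q \<noteq> {}) \<and>
     (\<forall>q. \<forall>a\<in>Act q. finite (set_pmf (p q a)) \<and> c q a > 0)"

text \<open>Histories of the induced MDP on lists: the past states together with the
  action (i,a) taken in each (i is a 0-based position).\<close>

type_synonym ('q,'a) hist = "('q list \<times> (nat \<times> 'a)) list"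

definition valid_strategy :: "('q \<Rightarrow> 'a set)
     \<Rightarrow> (('q,'a) hist \<Rightarrow> 'q list \<Rightarrow> (nat \<times> 'a) pmf) \<Rightarrow> bool" where
  "valid_strategy Act \<sigma> \<longleftrightarrow> (\<forall>h \<alpha>. \<alpha> \<noteq> [] \<longrightarrow>
      set_pmf (\<sigma> h \<alpha>) \<subseteq> {(i,a). i < length \<alpha> \<and> a \<in> Act (\<alpha> ! i)})"

primrec ecost :: "('q \<Rightarrow> 'a \<Rightarrow> 'q list pmf) \<Rightarrow> ('q \<Rightarrow> 'a \<Rightarrow> real)
     \<Rightarrow> (('q,'a) hist \<Rightarrow> 'q list \<Rightarrow> (nat \<times> 'a) pmf) \<Rightarrow> nat
     \<Rightarrow> ('q,'a) hist \<Rightarrow> 'q list \<Rightarrow> ennreal" where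
  "ecost p c \<sigma> 0 h \<alpha> = 0"
| "ecost p c \<sigma> (Suc n) h \<alpha> =
     (if \<alpha> = [] then 0 else
      \<integral>\<^sup>+ ia. (case ia of (i, a) \<Rightarrow>
          ennreal (c (\<alpha> ! i) a) +
          \<integral>\<^sup>+ \<beta>. ecost p c \<sigma> n (h @ [(\<alpha>, (i, a))]) (take i \<alpha> @ \<beta> @ drop (Suc i) \<alpha>)
             \<partial>measure_pmf (p (\<alpha> ! i) a))
        \<partial>measure_pmf (\<sigma> h \<alpha>))"

definition total_cost :: "('q \<Rightarrow> 'a \<Rightarrow> 'q list pmf) \<Rightarrow> ('q \<Rightarrow> 'a \<Rightarrow> real)
     \<Rightarrow> (('q,'a) hist \<Rightarrow> 'q list \<Rightarrow> (nat \<times> 'a) pmf) \<Rightarrow> 'q list \<Rightarrow> ennreal" where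
  "total_cost p c \<sigma> \<alpha> = (SUP n. ecost p c \<sigma> n [] \<alpha>)"

definition cstar :: "('q \<Rightarrow> 'a set) \<Rightarrow> ('q \<Rightarrow> 'a \<Rightarrow> 'q list pmf) \<Rightarrow> ('q \<Rightarrow> 'a \<Rightarrow> real)
     \<Rightarrow> 'q \<Rightarrow> ennreal" where
  "cstar Act p c q = (INF \<sigma> \<in> {\<sigma>. valid_strategy Act \<sigma>}. total_cost p c \<sigma> [q])"

definition Qstar :: "('q \<Rightarrow> 'a set) \<Rightarrow> ('q \<Rightarrow> 'a \<Rightarrow> 'q list pmf) \<Rightarrow> ('q \<Rightarrow> 'a \<Rightarrow> real)
     \<Rightarrow> 'q \<Rightarrow> 'a \<Rightarrow> ennreal" where
  "Qstar Act p c q a = ennreal (c q a) +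
     (\<integral>\<^sup>+ \<alpha>. (\<Sum>j<length \<alpha>. cstar Act p c (\<alpha> ! j)) \<partial>measure_pmf (p q a))"

text \<open>One step's randomness: a pair (q,a) drawn from sel, then a list drawn from p q a.
  The whole run is driven by an i.i.d. stream of such draws.\<close>

definition step_dist :: "('q \<Rightarrow> 'a \<Rightarrow> 'q list pmf) \<Rightarrow> ('q \<times> 'a) pmf
     \<Rightarrow> (('q \<times> 'a) \<times> 'q list) pmf" where
  "step_dist p sel = bind_pmf sel (\<lambda>qa. map_pmf (\<lambda>\<beta>. (qa, \<beta>)) (p (fst qa) (snd qa)))"

primrec qlearn :: "('q \<Rightarrow> 'a set) \<Rightarrow> ('q \<Rightarrow> 'a \<Rightarrow> real) \<Rightarrow> (nat \<Rightarrow> real)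
     \<Rightarrow> ('q \<times> 'a \<Rightarrow> real) \<Rightarrow> (('q \<times> 'a) \<times> 'q list) stream \<Rightarrow> nat \<Rightarrow> ('q \<times> 'a \<Rightarrow> real)" where
  "qlearn Act c lr Q0 \<omega> 0 = Q0"
| "qlearn Act c lr Q0 \<omega> (Suc i) =
     (let Q = qlearn Act c lr Q0 \<omega> i; qa = fst (\<omega> !! i); \<beta> = snd (\<omega> !! i) in
      Q(qa := (1 - lr i) * Q qa +
               lr i * (c (fst qa) (snd qa) + (\<Sum>j<length \<beta>. Min ((\<lambda>a'. Q (\<beta> ! j, a')) ` Act (\<beta> ! j))))))"

end

theory Submission
  imports Defs
begin

text \<open>Value iteration from \<open>0\<close> converges to a fixed point \<open>vlim\<close> of the Bellman operator, and
  a potential argument (every step of a strategy pays at least the potential it removes, while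
  the expected number of surviving entities vanishes when the total cost is finite) shows
  \<open>vlim \<le> c\<^sup>*\<close>; hence the Q-values \<open>Qlim\<close> of \<open>vlim\<close> lie below \<open>Q\<^sup>*\<close>.

  Fix a greedy policy for \<open>vlim\<close>. Evaluating every child with the greedy action instead of the
  minimising one yields a process that dominates Q-learning and is a stochastic approximation
  of the affine map \<open>U \<mapsto> c + M U\<close>, where \<open>M\<close> is the mean offspring operator of the greedy
  policy and \<open>Qlim\<close> is the fixed point. Since every step costs at least \<open>cmin > 0\<close>, \<open>M\<close> contracts
  the positive vector \<open>Qlim\<close>, and dually has a positive left sub-eigenvector. Together they give
  a quadratic Lyapunov function in the positive parts of \<open>U - Qlim\<close> whose expected drift is
  \<open>- \<kappa> \<lambda>\<^sub>i V + O(\<lambda>\<^sub>i\<^sup>2) (1 + V)\<close>. With \<open>\<Sum> \<lambda>\<^sub>i = \<infinity>\<close> and \<open>\<Sum> \<lambda>\<^sub>i\<^sup>2 < \<infinity>\<close> the expectation of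
  \<open>V\<close> tends to \<open>0\<close>, and Ville's maximal inequality for a rescaled supermartingale upgrades this
  to \<open>V \<longrightarrow> 0\<close> almost surely, which bounds \<open>limsup Q\<^sub>i\<close> by \<open>Qlim\<close>.\<close>

section \<open>Lower bounds on the optimal cost\<close>

primrec expect_at :: "('q \<Rightarrow> 'a \<Rightarrow> 'q list pmf) \<Rightarrow> (('q,'a) hist \<Rightarrow> 'q list \<Rightarrow> (nat \<times> 'a) pmf)
   \<Rightarrow> (('q,'a) hist \<Rightarrow> 'q list \<Rightarrow> ennreal) \<Rightarrow> nat \<Rightarrow> ('q,'a) hist \<Rightarrow> 'q list \<Rightarrow> ennreal" where
  "expect_at p \<sigma> f 0 h \<alpha> = f h \<alpha>"
| "expect_at p \<sigma> f (Suc n) h \<alpha> = (if \<alpha> = [] then f h \<alpha> else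
     \<integral>\<^sup>+ ia. (case ia of (i, a) \<Rightarrow>
          \<integral>\<^sup>+ \<beta>. expect_at p \<sigma> f n (h @ [(\<alpha>, (i, a))]) (take i \<alpha> @ \<beta> @ drop (Suc i) \<alpha>)
             \<partial>measure_pmf (p (\<alpha> ! i) a))
        \<partial>measure_pmf (\<sigma> h \<alpha>))"

lemma expect_at_mono:
  "(\<And>h \<alpha>. f h \<alpha> \<le> g h \<alpha>) \<Longrightarrow> expect_at p \<sigma> f n h \<alpha> \<le> expect_at p \<sigma> g n h \<alpha>"
  by (induction n arbitrary: h \<alpha>) (auto intro!: nn_integral_mono split: prod.splits)

lemma expect_at_cmult:
  "expect_at p \<sigma> (\<lambda>h \<alpha>. k * f h \<alpha>) n h \<alpha> = k * expect_at p \<sigma> f n h \<alpha>"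
  by (induction n arbitrary: h \<alpha>)
    (auto simp: nn_integral_cmult[symmetric] intro!: nn_integral_cong split: prod.splits)

lemma expect_at_SUP:
  assumes mono: "\<And>h \<alpha>. incseq (\<lambda>m. F m h \<alpha>)"
  shows "expect_at p \<sigma> (\<lambda>h \<alpha>. SUP m. F m h \<alpha>) n h \<alpha> = (SUP m. expect_at p \<sigma> (F m) n h \<alpha>)"
proof (induction n arbitrary: h \<alpha>)
  case (Suc n)
  have mono_n: "incseq (\<lambda>m. expect_at p \<sigma> (F m) n h \<alpha>)" for h \<alpha>
    using mono by (auto simp: incseq_def intro!: expect_at_mono)
  show ?case
  proof (cases "\<alpha> = []")
    case False
    then show ?thesis
      by (simp add: Suc.IH, subst nn_integral_monotone_convergence_SUP[symmetric])
        (auto simp: incseq_def le_fun_def split: prod.splits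
          intro!: nn_integral_cong nn_integral_mono nn_integral_monotone_convergence_SUP
          intro: mono_n[THEN incseqD])
  qed simp
qed simp

lemma ecost_add:
  "ecost p c \<sigma> (n + m) h \<alpha> = ecost p c \<sigma> n h \<alpha> + expect_at p \<sigma> (ecost p c \<sigma> m) n h \<alpha>"
proof (induction n arbitrary: h \<alpha>)
  case (Suc n)
  show ?case
  proof (cases "\<alpha> = []")
    case True
    then show ?thesis by (cases m) simp_all
  next
    case False
    then show ?thesis
      by (simp add: Suc.IH nn_integral_add[symmetric] add.assoc split_beta')
  qed
qed simp

lemma const_le_nn_integral_pmf:
  assumes "\<And>x. x \<in> set_pmf M \<Longrightarrow> k \<le> f x"
  shows "k \<le> \<integral>\<^sup>+ x. f x \<partial>measure_pmf M"
proof -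
  have "k = \<integral>\<^sup>+ x. k \<partial>measure_pmf M" by simp
  also have "\<dots> \<le> \<integral>\<^sup>+ x. f x \<partial>measure_pmf M"
    using assms by (intro nn_integral_mono_AE) (simp add: AE_measure_pmf_iff)
  finally show ?thesis .
qed

lemma valid_strategy_choice:
  assumes "valid_strategy Act \<sigma>" "\<alpha> \<noteq> []" "(i, a) \<in> set_pmf (\<sigma> h \<alpha>)"
  shows "i < length \<alpha>" "a \<in> Act (\<alpha> ! i)"
  using assms unfolding valid_strategy_def by auto

lemma ecost_ge_min_length:
  assumes \<sigma>: "valid_strategy Act \<sigma>" and cmin: "\<And>q a. a \<in> Act q \<Longrightarrow> cmin \<le> c q a"
  shows "ennreal cmin * of_nat (min m (length \<alpha>)) \<le> ecost p c \<sigma> m h \<alpha>"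
proof (induction m arbitrary: h \<alpha>)
  case (Suc m)
  show ?case
  proof (cases "\<alpha> = []")
    case False
    have "ennreal cmin * of_nat (min (Suc m) (length \<alpha>))
        \<le> ennreal (c (\<alpha> ! i) a) +
          \<integral>\<^sup>+ \<beta>. ecost p c \<sigma> m (h @ [(\<alpha>, (i, a))]) (take i \<alpha> @ \<beta> @ drop (Suc i) \<alpha>)
             \<partial>measure_pmf (p (\<alpha> ! i) a)"
      if ia: "(i, a) \<in> set_pmf (\<sigma> h \<alpha>)" for i a
    proof -
      note i = valid_strategy_choice[OF \<sigma> False ia]
      have "ennreal cmin * of_nat (min (Suc m) (length \<alpha>))
          = ennreal cmin + ennreal cmin * of_nat (min m (length \<alpha> - 1))"
        using False by (cases "length \<alpha>") (auto simp: distrib_left min_def)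
      also have "\<dots> \<le> ennreal (c (\<alpha> ! i) a) +
          \<integral>\<^sup>+ \<beta>. ennreal cmin * of_nat (min m (length (take i \<alpha> @ \<beta> @ drop (Suc i) \<alpha>)))
             \<partial>measure_pmf (p (\<alpha> ! i) a)"
      proof (rule add_mono)
        show "ennreal cmin \<le> ennreal (c (\<alpha> ! i) a)"
          using cmin[OF i(2)] by (rule ennreal_leI)
        show "ennreal cmin * of_nat (min m (length \<alpha> - 1)) \<le> \<integral>\<^sup>+ \<beta>.
            ennreal cmin * of_nat (min m (length (take i \<alpha> @ \<beta> @ drop (Suc i) \<alpha>))) \<partial>measure_pmf (p (\<alpha> ! i) a)"
          using i(1) by (intro const_le_nn_integral_pmf mult_left_mono) auto
      qed
      also have "\<dots> \<le> ennreal (c (\<alpha> ! i) a) +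
          \<integral>\<^sup>+ \<beta>. ecost p c \<sigma> m (h @ [(\<alpha>, (i, a))]) (take i \<alpha> @ \<beta> @ drop (Suc i) \<alpha>)
             \<partial>measure_pmf (p (\<alpha> ! i) a)"
        by (intro add_left_mono nn_integral_mono Suc.IH)
      finally show ?thesis .
    qed
    then show ?thesis
      using False by (auto intro!: const_le_nn_integral_pmf)
  qed simp
qed simp

definition list_potential :: "('q \<Rightarrow> real) \<Rightarrow> 'q list \<Rightarrow> ennreal" where
  "list_potential g xs = (\<Sum>x\<leftarrow>xs. ennreal (g x))"

lemma list_potential_append [simp]:
  "list_potential g (xs @ ys) = list_potential g xs + list_potential g ys"
  by (simp add: list_potential_def)

lemma list_potential_le_length:
  "(\<And>q. g q \<le> B) \<Longrightarrow> list_potential g xs \<le> ennreal B * of_nat (length xs)"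
  unfolding list_potential_def
  using sum_list_mono[of xs "\<lambda>x. ennreal (g x)" "\<lambda>_. ennreal B"]
  by (simp add: sum_list_triv mult.commute ennreal_leI)

lemma list_potential_replace_le:
  assumes i: "i < length \<alpha>"
    and sub: "ennreal (g (\<alpha> ! i)) \<le> k + (\<integral>\<^sup>+\<beta>. list_potential g \<beta> \<partial>measure_pmf D)"
  shows "list_potential g \<alpha> \<le> k + (\<integral>\<^sup>+\<beta>. list_potential g (take i \<alpha> @ \<beta> @ drop (Suc i) \<alpha>) \<partial>measure_pmf D)"
proof -
  let ?P = "list_potential g"
  have "?P \<alpha> = ?P (take i \<alpha>) + ennreal (g (\<alpha> ! i)) + ?P (drop (Suc i) \<alpha>)"
    using id_take_nth_drop[OF i] list_potential_append[of g "take i \<alpha>"]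
    by (metis add.assoc append_Cons append_Nil list_potential_def list.simps(9) sum_list.Cons)
  also have "\<dots> \<le> ?P (take i \<alpha>) + (k + (\<integral>\<^sup>+\<beta>. ?P \<beta> \<partial>measure_pmf D)) + ?P (drop (Suc i) \<alpha>)"
    using sub by (intro add_mono order_refl)
  also have "\<dots> = k + (\<integral>\<^sup>+\<beta>. ?P (take i \<alpha> @ \<beta> @ drop (Suc i) \<alpha>) \<partial>measure_pmf D)"
    by (simp add: nn_integral_add algebra_simps)
  finally show ?thesis .
qed

lemma list_potential_le_ecost:
  assumes \<sigma>: "valid_strategy Act \<sigma>"
    and sub: "\<And>q a. a \<in> Act q \<Longrightarrow>
      ennreal (g q) \<le> ennreal (c q a) + (\<integral>\<^sup>+\<beta>. list_potential g \<beta> \<partial>measure_pmf (p q a))"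
    and B: "\<And>q. g q \<le> B"
  shows "list_potential g \<alpha>
    \<le> ecost p c \<sigma> n h \<alpha> + expect_at p \<sigma> (\<lambda>h \<alpha>. ennreal B * of_nat (length \<alpha>)) n h \<alpha>"
proof (induction n arbitrary: h \<alpha>)
  case 0
  then show ?case using list_potential_le_length[OF B] by simp
next
  case (Suc n)
  let ?E = "expect_at p \<sigma> (\<lambda>h \<alpha>. ennreal B * of_nat (length \<alpha>))"
  show ?case
  proof (cases "\<alpha> = []")
    case True
    then show ?thesis by (simp add: list_potential_def)
  next
    case False
    have "list_potential g \<alpha> \<le> ennreal (c (\<alpha> ! i) a) +
        \<integral>\<^sup>+ \<beta>. ecost p c \<sigma> n (h @ [(\<alpha>, (i, a))]) (take i \<alpha> @ \<beta> @ drop (Suc i) \<alpha>)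
          + ?E n (h @ [(\<alpha>, (i, a))]) (take i \<alpha> @ \<beta> @ drop (Suc i) \<alpha>) \<partial>measure_pmf (p (\<alpha> ! i) a)"
      if ia: "(i, a) \<in> set_pmf (\<sigma> h \<alpha>)" for i a
      using valid_strategy_choice[OF \<sigma> False ia] sub
      by (blast intro: order_trans[OF list_potential_replace_le] add_left_mono nn_integral_mono Suc.IH)
    then have "list_potential g \<alpha> \<le> \<integral>\<^sup>+ ia. (case ia of (i, a) \<Rightarrow> ennreal (c (\<alpha> ! i) a) +
        \<integral>\<^sup>+ \<beta>. ecost p c \<sigma> n (h @ [(\<alpha>, (i, a))]) (take i \<alpha> @ \<beta> @ drop (Suc i) \<alpha>)
          + ?E n (h @ [(\<alpha>, (i, a))]) (take i \<alpha> @ \<beta> @ drop (Suc i) \<alpha>) \<partial>measure_pmf (p (\<alpha> ! i) a))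
        \<partial>measure_pmf (\<sigma> h \<alpha>)"
      by (auto intro!: const_le_nn_integral_pmf)
    also have "\<dots> = ecost p c \<sigma> (Suc n) h \<alpha> + ?E (Suc n) h \<alpha>"
      using False by (simp add: nn_integral_add[symmetric] add.assoc split_beta')
    finally show ?thesis .
  qed
qed

lemma SUP_of_nat_min: "(SUP m. of_nat (min m k) :: ennreal) = of_nat k"
  by (rule antisym, rule SUP_least, simp, rule SUP_upper2[of k]) auto

lemma ecost_plus_expected_length_le_SUP:
  assumes \<sigma>: "valid_strategy Act \<sigma>" and cmin: "\<And>q a. a \<in> Act q \<Longrightarrow> cmin \<le> c q a"
  shows "ecost p c \<sigma> n h \<alpha> + ennreal cmin * expect_at p \<sigma> (\<lambda>h \<alpha>. of_nat (length \<alpha>)) n h \<alpha>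
    \<le> (SUP n. ecost p c \<sigma> n h \<alpha>)"
proof -
  have "ecost p c \<sigma> n h \<alpha> + ennreal cmin * expect_at p \<sigma> (\<lambda>h \<alpha>. of_nat (min m (length \<alpha>))) n h \<alpha>
      \<le> (SUP n. ecost p c \<sigma> n h \<alpha>)" for m
  proof -
    have "ennreal cmin * expect_at p \<sigma> (\<lambda>h \<alpha>. of_nat (min m (length \<alpha>))) n h \<alpha>
        \<le> expect_at p \<sigma> (ecost p c \<sigma> m) n h \<alpha>"
      unfolding expect_at_cmult[symmetric] by (intro expect_at_mono ecost_ge_min_length[OF \<sigma> cmin])
    then have "ecost p c \<sigma> n h \<alpha> + ennreal cmin * expect_at p \<sigma> (\<lambda>h \<alpha>. of_nat (min m (length \<alpha>))) n h \<alpha>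
        \<le> ecost p c \<sigma> (n + m) h \<alpha>"
      unfolding ecost_add by (rule add_left_mono)
    also have "\<dots> \<le> (SUP n. ecost p c \<sigma> n h \<alpha>)" by (rule SUP_upper) simp
    finally show ?thesis .
  qed
  moreover have "expect_at p \<sigma> (\<lambda>h \<alpha>. of_nat (length \<alpha>)) n h \<alpha>
      = (SUP m. expect_at p \<sigma> (\<lambda>h \<alpha>. of_nat (min m (length \<alpha>))) n h \<alpha>)"
    by (subst expect_at_SUP[symmetric]) (auto simp: SUP_of_nat_min incseq_def)
  ultimately show ?thesis
    by (simp add: SUP_mult_left_ennreal ennreal_SUP_add_right SUP_least)
qed

lemma le_SUP_of_vanishing_gap:
  fixes e L :: "nat \<Rightarrow> ennreal"
  assumes k: "0 < k" and B: "0 \<le> B"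
    and gap: "\<And>n. e n + ennreal k * L n \<le> (SUP n. e n)"
    and bound: "\<And>n. x \<le> e n + ennreal B * L n"
  shows "x \<le> (SUP n. e n)"
proof (rule ennreal_le_epsilon)
  fix \<epsilon> :: real
  define T where "T = (SUP n. e n)"
  assume fin: "(SUP n. e n) < \<top>" and \<epsilon>: "0 < \<epsilon>"
  define \<delta> where "\<delta> = \<epsilon> * k / (B + 1)"
  have \<delta>: "0 < \<delta>" unfolding \<delta>_def using \<epsilon> k B by simp
  have "T < T + ennreal \<delta>"
    using fin \<delta> unfolding T_def[symmetric] by simp
  also have "\<dots> = (SUP n. e n + ennreal \<delta>)"
    unfolding T_def by (simp add: ennreal_SUP_add_left)
  finally obtain n where n: "T < e n + ennreal \<delta>"
    by (auto simp: less_SUP_iff)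
  have en_le: "e n \<le> T"
    unfolding T_def by (rule SUP_upper) simp
  then have en: "e n \<noteq> \<top>"
    using fin unfolding T_def[symmetric] by (auto simp: top_unique)
  have "e n + ennreal k * L n < e n + ennreal \<delta>"
    using gap[of n] n unfolding T_def by (rule le_less_trans)
  then have kL: "ennreal k * L n < ennreal \<delta>"
    using en by (simp add: ennreal_add_left_cancel_less)
  have "ennreal B * L n = ennreal (B / k) * (ennreal k * L n)"
    using k B by (simp add: ennreal_mult[symmetric] mult.assoc[symmetric])
  also have "\<dots> \<le> ennreal (B / k) * ennreal \<delta>"
    using kL by (intro mult_left_mono) auto
  also have "\<dots> \<le> ennreal \<epsilon>"
    using k B \<epsilon> by (simp add: ennreal_mult[symmetric] \<delta>_def field_simps ennreal_leI)
  finally have "x \<le> e n + ennreal \<epsilon>"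
    using bound[of n] by (meson add_left_mono order_trans)
  also have "\<dots> \<le> T + ennreal \<epsilon>"
    using en_le by (rule add_right_mono)
  finally show "x \<le> (SUP n. e n) + ennreal \<epsilon>" unfolding T_def .
qed

lemma subsolution_le_total_cost:
  assumes \<sigma>: "valid_strategy Act \<sigma>"
    and cmin: "0 < cmin" "\<And>q a. a \<in> Act q \<Longrightarrow> cmin \<le> c q a"
    and sub: "\<And>q a. a \<in> Act q \<Longrightarrow>
      ennreal (g q) \<le> ennreal (c q a) + (\<integral>\<^sup>+\<beta>. list_potential g \<beta> \<partial>measure_pmf (p q a))"
    and B: "0 \<le> B" "\<And>q. g q \<le> B"
  shows "ennreal (g q) \<le> total_cost p c \<sigma> [q]"
  unfolding total_cost_def
proof (rule le_SUP_of_vanishing_gap[OF cmin(1) B(1)])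
  let ?L = "\<lambda>n. expect_at p \<sigma> (\<lambda>h \<alpha>. of_nat (length \<alpha>)) n [] [q]"
  show "ecost p c \<sigma> n [] [q] + ennreal cmin * ?L n \<le> (SUP n. ecost p c \<sigma> n [] [q])" for n
    by (rule ecost_plus_expected_length_le_SUP[OF \<sigma> cmin(2)])
  show "ennreal (g q) \<le> ecost p c \<sigma> n [] [q] + ennreal B * ?L n" for n
    using list_potential_le_ecost[OF \<sigma> sub B(2), where \<alpha>="[q]" and n=n and h="[]"]
    by (simp add: list_potential_def expect_at_cmult)
qed

section \<open>Value iteration\<close>

lemma sum_list_map_nonneg: "(\<And>x. 0 \<le> f x) \<Longrightarrow> 0 \<le> (\<Sum>x\<leftarrow>xs. f x :: real)"
  by (rule sum_list_nonneg) auto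

lemma tendsto_sum_list:
  fixes f :: "'i \<Rightarrow> 'b \<Rightarrow> real"
  shows "(\<And>x. x \<in> set xs \<Longrightarrow> ((\<lambda>k. f k x) \<longlongrightarrow> g x) F)
    \<Longrightarrow> ((\<lambda>k. \<Sum>x\<leftarrow>xs. f k x) \<longlongrightarrow> (\<Sum>x\<leftarrow>xs. g x)) F"
  by (induction xs) (auto intro!: tendsto_add)

lemma tendsto_Min:
  fixes f :: "'i \<Rightarrow> 'b \<Rightarrow> real"
  assumes "finite A" "A \<noteq> {}" "\<And>a. a \<in> A \<Longrightarrow> ((\<lambda>k. f k a) \<longlongrightarrow> g a) F"
  shows "((\<lambda>k. Min (f k ` A)) \<longlongrightarrow> Min (g ` A)) F"
  using assms
proof (induction A rule: finite_ne_induct)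
  case (insert x A)
  then show ?case by (auto intro!: tendsto_min)
qed simp

locale finite_Qstar_bmdp =
  fixes Act :: "'q::finite \<Rightarrow> 'a::finite set"
    and p :: "'q \<Rightarrow> 'a \<Rightarrow> 'q list pmf"
    and c :: "'q \<Rightarrow> 'a \<Rightarrow> real"
  assumes bmdp: "bmdp Act p c"
    and Qstar_finite: "\<forall>q. \<forall>a\<in>Act q. Qstar Act p c q a < \<infinity>"
begin

lemma Act_nonempty: "Act q \<noteq> {}"
  using bmdp unfolding bmdp_def by auto

lemma finite_transitions: "a \<in> Act q \<Longrightarrow> finite (set_pmf (p q a))"
  using bmdp unfolding bmdp_def by auto

lemma cost_pos: "a \<in> Act q \<Longrightarrow> 0 < c q a"
  using bmdp unfolding bmdp_def by auto

definition pairs :: "('q \<times> 'a) set" where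
  "pairs = {(q, a). a \<in> Act q}"

lemma mem_pairs [simp]: "(q, a) \<in> pairs \<longleftrightarrow> a \<in> Act q"
  by (simp add: pairs_def)

lemma pairs_iff: "s \<in> pairs \<longleftrightarrow> snd s \<in> Act (fst s)"
  by (cases s) simp

lemma pairs_nonempty: "pairs \<noteq> {}"
  using Act_nonempty by (auto simp: pairs_def)

definition cmin :: real where
  "cmin = Min (case_prod c ` pairs)"

lemma cmin_le: "a \<in> Act q \<Longrightarrow> cmin \<le> c q a"
  unfolding cmin_def by (rule Min_le) force+

lemma cmin_pos: "0 < cmin"
  unfolding cmin_def using pairs_nonempty by (subst Min_gr_iff) (auto simp: pairs_def cost_pos)

definition expect :: "'q \<Rightarrow> 'a \<Rightarrow> ('q list \<Rightarrow> real) \<Rightarrow> real" where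
  "expect q a f = (\<Sum>\<beta>\<in>set_pmf (p q a). pmf (p q a) \<beta> * f \<beta>)"

lemma nn_integral_eq_expect:
  assumes "a \<in> Act q" "\<And>\<beta>. \<beta> \<in> set_pmf (p q a) \<Longrightarrow> 0 \<le> f \<beta>"
  shows "(\<integral>\<^sup>+\<beta>. ennreal (f \<beta>) \<partial>measure_pmf (p q a)) = ennreal (expect q a f)"
  unfolding expect_def using assms
  by (subst nn_integral_measure_pmf_finite[OF finite_transitions])
     (auto simp: ennreal_mult[symmetric] mult.commute intro!: sum_ennreal sum.cong)

lemma expect_mono: "(\<And>\<beta>. \<beta> \<in> set_pmf (p q a) \<Longrightarrow> f \<beta> \<le> g \<beta>) \<Longrightarrow> expect q a f \<le> expect q a g"
  unfolding expect_def by (intro sum_mono mult_left_mono) auto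

lemma expect_nonneg: "(\<And>\<beta>. \<beta> \<in> set_pmf (p q a) \<Longrightarrow> 0 \<le> f \<beta>) \<Longrightarrow> 0 \<le> expect q a f"
  unfolding expect_def by (intro sum_nonneg mult_nonneg_nonneg) auto

lemma expect_const: "a \<in> Act q \<Longrightarrow> expect q a (\<lambda>_. k) = k"
  unfolding expect_def using sum_pmf_eq_1[OF finite_transitions, of a q "p q a"]
  by (simp add: sum_distrib_right[symmetric])

lemma expect_add: "expect q a (\<lambda>\<beta>. f \<beta> + g \<beta>) = expect q a f + expect q a g"
  unfolding expect_def by (simp add: distrib_left sum.distrib)

lemma expect_cmult: "expect q a (\<lambda>\<beta>. k * f \<beta>) = k * expect q a f"
  unfolding expect_def by (simp add: sum_distrib_left algebra_simps)

lemma expect_diff: "expect q a (\<lambda>\<beta>. f \<beta> - g \<beta>) = expect q a f - expect q a g"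
  unfolding expect_def by (simp add: right_diff_distrib sum_subtractf)

lemma expect_sum: "expect q a (\<lambda>\<beta>. \<Sum>t\<in>T. g t \<beta>) = (\<Sum>t\<in>T. expect q a (g t))"
  unfolding expect_def by (simp add: sum_distrib_left) (rule sum.swap)

lemma tendsto_expect:
  "(\<And>\<beta>. ((\<lambda>k. f k \<beta>) \<longlongrightarrow> g \<beta>) F) \<Longrightarrow> ((\<lambda>k. expect q a (f k)) \<longlongrightarrow> expect q a g) F"
  unfolding expect_def by (intro tendsto_sum tendsto_mult tendsto_const) auto

definition bellman :: "('q \<Rightarrow> real) \<Rightarrow> 'q \<Rightarrow> real" where
  "bellman g q = Min ((\<lambda>a. c q a + expect q a (\<lambda>\<beta>. \<Sum>x\<leftarrow>\<beta>. g x)) ` Act q)"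

lemma bellman_le: "a \<in> Act q \<Longrightarrow> bellman g q \<le> c q a + expect q a (\<lambda>\<beta>. \<Sum>x\<leftarrow>\<beta>. g x)"
  unfolding bellman_def by (rule Min_le) auto

lemma bellman_attained: "\<exists>a\<in>Act q. bellman g q = c q a + expect q a (\<lambda>\<beta>. \<Sum>x\<leftarrow>\<beta>. g x)"
proof -
  have "bellman g q \<in> (\<lambda>a. c q a + expect q a (\<lambda>\<beta>. \<Sum>x\<leftarrow>\<beta>. g x)) ` Act q"
    unfolding bellman_def using Act_nonempty by (intro Min_in) auto
  then show ?thesis by auto
qed

lemma bellman_mono:
  assumes "\<And>q. g q \<le> g' q"
  shows "bellman g q \<le> bellman g' q"
proof -
  obtain a where a: "a \<in> Act q" "bellman g' q = c q a + expect q a (\<lambda>\<beta>. \<Sum>x\<leftarrow>\<beta>. g' x)"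
    using bellman_attained by blast
  have "bellman g q \<le> c q a + expect q a (\<lambda>\<beta>. \<Sum>x\<leftarrow>\<beta>. g x)"
    using a(1) by (rule bellman_le)
  also have "\<dots> \<le> bellman g' q"
    unfolding a(2) using assms by (intro add_left_mono expect_mono sum_list_mono) auto
  finally show ?thesis .
qed

lemma bellman_nonneg:
  assumes "\<And>q. 0 \<le> g q"
  shows "0 \<le> bellman g q"
proof -
  obtain a where a: "a \<in> Act q" "bellman g q = c q a + expect q a (\<lambda>\<beta>. \<Sum>x\<leftarrow>\<beta>. g x)"
    using bellman_attained by blast
  show ?thesis
    unfolding a(2) using assms cost_pos[OF a(1)]
    by (intro add_nonneg_nonneg expect_nonneg sum_list_map_nonneg) (auto simp: less_imp_le)
qed

primrec value_iter :: "nat \<Rightarrow> 'q \<Rightarrow> real" where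
  "value_iter 0 = (\<lambda>q. 0)"
| "value_iter (Suc k) = bellman (value_iter k)"

lemma value_iter_nonneg: "0 \<le> value_iter k q"
  by (induction k arbitrary: q) (auto intro: bellman_nonneg)

lemma value_iter_le_Suc: "value_iter k q \<le> value_iter (Suc k) q"
proof (induction k arbitrary: q)
  case 0
  then show ?case by (simp add: bellman_nonneg)
next
  case (Suc k)
  then show ?case by (simp add: bellman_mono)
qed

lemma subsolution_le_cstar:
  assumes g: "\<And>q. 0 \<le> g q"
    and sub: "\<And>q a. a \<in> Act q \<Longrightarrow> g q \<le> c q a + expect q a (\<lambda>\<beta>. \<Sum>x\<leftarrow>\<beta>. g x)"
  shows "ennreal (g q) \<le> cstar Act p c q"
proof -
  define B where "B = Max (range g)"
  have B: "g q \<le> B" for q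
    unfolding B_def by (rule Max_ge) auto
  have "ennreal (g q) \<le> ennreal (c q a) + (\<integral>\<^sup>+\<beta>. list_potential g \<beta> \<partial>measure_pmf (p q a))"
    if a: "a \<in> Act q" for q a
  proof -
    have "(\<integral>\<^sup>+\<beta>. list_potential g \<beta> \<partial>measure_pmf (p q a))
        = ennreal (expect q a (\<lambda>\<beta>. \<Sum>x\<leftarrow>\<beta>. g x))"
      unfolding list_potential_def using a g
      by (simp add: sum_list_map_nonneg) (intro nn_integral_eq_expect, auto intro: sum_list_map_nonneg)
    moreover have "0 \<le> expect q a (\<lambda>\<beta>. \<Sum>x\<leftarrow>\<beta>. g x)"
      using g by (intro expect_nonneg sum_list_map_nonneg)
    ultimately show ?thesis
      using sub[OF a] cost_pos[OF a] g
      by (simp add: ennreal_plus[symmetric] ennreal_leI del: ennreal_plus)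
  qed
  moreover have "0 \<le> B"
    using g[of q] B[of q] by linarith
  ultimately show ?thesis
    unfolding cstar_def using B cmin_pos cmin_le
    by (intro INF_greatest subsolution_le_total_cost[where cmin=cmin and B=B]) auto
qed

lemma value_iter_le_cstar: "ennreal (value_iter k q) \<le> cstar Act p c q"
proof (rule subsolution_le_cstar)
  fix q a assume "a \<in> Act q"
  then show "value_iter k q \<le> c q a + expect q a (\<lambda>\<beta>. \<Sum>x\<leftarrow>\<beta>. value_iter k x)"
    using value_iter_le_Suc[of k q] bellman_le[of a q "value_iter k"] by simp
qed (rule value_iter_nonneg)

lemma Q_value_le_Qstar:
  assumes a: "a \<in> Act q" and g: "\<And>q. 0 \<le> g q" "\<And>q. ennreal (g q) \<le> cstar Act p c q"
  shows "ennreal (c q a + expect q a (\<lambda>\<beta>. \<Sum>x\<leftarrow>\<beta>. g x)) \<le> Qstar Act p c q a"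
proof -
  have "ennreal (expect q a (\<lambda>\<beta>. \<Sum>x\<leftarrow>\<beta>. g x))
      = (\<integral>\<^sup>+\<beta>. (\<Sum>x\<leftarrow>\<beta>. ennreal (g x)) \<partial>measure_pmf (p q a))"
    using a g
    by (simp add: sum_list_map_nonneg) (intro nn_integral_eq_expect[symmetric], auto intro: sum_list_map_nonneg)
  also have "\<dots> \<le> (\<integral>\<^sup>+\<beta>. (\<Sum>j<length \<beta>. cstar Act p c (\<beta> ! j)) \<partial>measure_pmf (p q a))"
    using g(2) by (auto simp: sum_list_sum_nth atLeast0LessThan intro!: nn_integral_mono sum_mono)
  finally have "ennreal (expect q a (\<lambda>\<beta>. \<Sum>x\<leftarrow>\<beta>. g x))
      \<le> (\<integral>\<^sup>+\<beta>. (\<Sum>j<length \<beta>. cstar Act p c (\<beta> ! j)) \<partial>measure_pmf (p q a))" .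
  moreover have "0 \<le> expect q a (\<lambda>\<beta>. \<Sum>x\<leftarrow>\<beta>. g x)"
    using g(1) by (intro expect_nonneg sum_list_map_nonneg)
  ultimately show ?thesis
    unfolding Qstar_def using cost_pos[OF a]
    by (simp add: ennreal_plus add_left_mono)
qed

lemma value_iter_bounded: "\<exists>B. \<forall>k. value_iter k q \<le> B"
proof -
  obtain a where a: "a \<in> Act q"
    using Act_nonempty by blast
  have "value_iter (Suc k) q \<le> enn2real (Qstar Act p c q a)" for k
  proof -
    have "ennreal (c q a + expect q a (\<lambda>\<beta>. \<Sum>x\<leftarrow>\<beta>. value_iter k x)) \<le> Qstar Act p c q a"
      using a by (intro Q_value_le_Qstar value_iter_nonneg value_iter_le_cstar)
    then have "enn2real (ennreal (c q a + expect q a (\<lambda>\<beta>. \<Sum>x\<leftarrow>\<beta>. value_iter k x)))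
        \<le> enn2real (Qstar Act p c q a)"
      using Qstar_finite a by (intro enn2real_mono) auto
    moreover have "0 \<le> c q a + expect q a (\<lambda>\<beta>. \<Sum>x\<leftarrow>\<beta>. value_iter k x)"
      using cost_pos[OF a] value_iter_nonneg
      by (intro add_nonneg_nonneg expect_nonneg sum_list_map_nonneg) (auto simp: less_imp_le)
    ultimately have "c q a + expect q a (\<lambda>\<beta>. \<Sum>x\<leftarrow>\<beta>. value_iter k x) \<le> enn2real (Qstar Act p c q a)"
      by simp
    then show ?thesis
      using bellman_le[OF a, of "value_iter k"] by simp
  qed
  then have "value_iter k q \<le> enn2real (Qstar Act p c q a)" for k
    by (cases k) simp_all
  then show ?thesis by blast
qed

definition vlim :: "'q \<Rightarrow> real" where
  "vlim q = (SUP k. value_iter k q)"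

lemma value_iter_tendsto_vlim: "(\<lambda>k. value_iter k q) \<longlonglongrightarrow> vlim q"
  unfolding vlim_def using value_iter_bounded[of q]
  by (intro LIMSEQ_incseq_SUP) (auto intro: bdd_aboveI incseq_SucI value_iter_le_Suc simp del: value_iter.simps)

lemma vlim_nonneg: "0 \<le> vlim q"
  using value_iter_tendsto_vlim by (rule LIMSEQ_le_const) (auto intro: value_iter_nonneg)

lemma bellman_vlim: "bellman vlim q = vlim q"
proof (rule LIMSEQ_unique)
  show "(\<lambda>k. value_iter (Suc k) q) \<longlonglongrightarrow> vlim q"
    using value_iter_tendsto_vlim by (rule LIMSEQ_Suc)
  show "(\<lambda>k. value_iter (Suc k) q) \<longlonglongrightarrow> bellman vlim q"
    unfolding value_iter.simps bellman_def using Act_nonempty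
    by (intro tendsto_Min tendsto_add tendsto_const tendsto_expect tendsto_sum_list value_iter_tendsto_vlim) auto
qed

lemma vlim_le_cstar: "ennreal (vlim q) \<le> cstar Act p c q"
  using tendsto_ennrealI[OF value_iter_tendsto_vlim]
  by (rule LIMSEQ_le_const2) (auto intro: value_iter_le_cstar)
end

section \<open>The offspring operator of a greedy policy\<close>

context finite_Qstar_bmdp
begin

definition Qlim :: "'q \<times> 'a \<Rightarrow> real" where
  "Qlim s = c (fst s) (snd s) + expect (fst s) (snd s) (\<lambda>\<beta>. \<Sum>x\<leftarrow>\<beta>. vlim x)"

lemma Qlim_le_Qstar: "a \<in> Act q \<Longrightarrow> ennreal (Qlim (q, a)) \<le> Qstar Act p c q a"
  unfolding Qlim_def by (auto intro: Q_value_le_Qstar vlim_nonneg vlim_le_cstar)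

definition greedy :: "'q \<Rightarrow> 'a" where
  "greedy q = (SOME a. a \<in> Act q \<and> Qlim (q, a) = vlim q)"

lemma greedy: "greedy q \<in> Act q \<and> Qlim (q, greedy q) = vlim q"
proof -
  obtain a where "a \<in> Act q" "bellman vlim q = c q a + expect q a (\<lambda>\<beta>. \<Sum>x\<leftarrow>\<beta>. vlim x)"
    using bellman_attained by blast
  then have "\<exists>a. a \<in> Act q \<and> Qlim (q, a) = vlim q"
    using bellman_vlim[of q] unfolding Qlim_def by auto
  then show ?thesis
    unfolding greedy_def by (rule someI_ex)
qed

lemma greedy_in_Act [simp]: "greedy q \<in> Act q"
  using greedy by simp

definition offspring :: "('q \<times> 'a \<Rightarrow> real) \<Rightarrow> 'q \<times> 'a \<Rightarrow> real" where
  "offspring f s = expect (fst s) (snd s) (\<lambda>\<beta>. \<Sum>x\<leftarrow>\<beta>. f (x, greedy x))"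

lemma offspring_cong:
  assumes "\<And>t. t \<in> pairs \<Longrightarrow> f t = g t"
  shows "offspring f s = offspring g s"
proof -
  have "(\<lambda>\<beta>. \<Sum>x\<leftarrow>\<beta>. f (x, greedy x)) = (\<lambda>\<beta>. \<Sum>x\<leftarrow>\<beta>. g (x, greedy x))"
    using assms by (auto intro!: ext arg_cong[where f=sum_list] map_cong)
  then show ?thesis
    unfolding offspring_def by simp
qed

lemma offspring_mono:
  "(\<And>t. t \<in> pairs \<Longrightarrow> f t \<le> g t) \<Longrightarrow> offspring f s \<le> offspring g s"
  unfolding offspring_def by (intro expect_mono sum_list_mono) auto

lemma offspring_nonneg: "(\<And>t. t \<in> pairs \<Longrightarrow> 0 \<le> f t) \<Longrightarrow> 0 \<le> offspring f s"
  using offspring_mono[of "\<lambda>_. 0" f s] by (simp add: offspring_def expect_def)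

lemma offspring_sum: "offspring (\<lambda>u. \<Sum>t\<in>T. g t u) s = (\<Sum>t\<in>T. offspring (g t) s)"
proof -
  have "(\<Sum>x\<leftarrow>\<beta>. \<Sum>t\<in>T. g t (x, greedy x)) = (\<Sum>t\<in>T. \<Sum>x\<leftarrow>\<beta>. g t (x, greedy x))" for \<beta>
    by (induction \<beta>) (auto simp: sum.distrib)
  then show ?thesis
    unfolding offspring_def by (simp add: expect_sum)
qed

lemma offspring_cmult: "offspring (\<lambda>u. k * g u) s = k * offspring g s"
  unfolding offspring_def by (simp add: sum_list_const_mult expect_cmult)

lemma offspring_add: "offspring (\<lambda>u. f u + g u) s = offspring f s + offspring g s"
  unfolding offspring_def by (simp add: sum_list_addf expect_add)

lemma offspring_diff: "offspring (\<lambda>u. f u - g u) s = offspring f s - offspring g s"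
  unfolding offspring_def by (simp add: sum_list_subtractf expect_diff)

lemma Qlim_eq: "s \<in> pairs \<Longrightarrow> c (fst s) (snd s) + offspring Qlim s = Qlim s"
  using greedy unfolding offspring_def by (simp add: Qlim_def)

lemma Qlim_ge_cost: "s \<in> pairs \<Longrightarrow> c (fst s) (snd s) \<le> Qlim s"
  unfolding Qlim_def using vlim_nonneg
  by (auto intro!: expect_nonneg sum_list_map_nonneg simp: pairs_def)

lemma cost_pos': "s \<in> pairs \<Longrightarrow> 0 < c (fst s) (snd s)"
  by (auto simp: pairs_def cost_pos)

lemma Qlim_pos: "s \<in> pairs \<Longrightarrow> 0 < Qlim s"
  using Qlim_ge_cost cost_pos' by (meson less_le_trans)

definition Qmin :: real where "Qmin = Min (Qlim ` pairs)"
definition Qmax :: real where "Qmax = Max (Qlim ` pairs)"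

lemma Qmin_le: "s \<in> pairs \<Longrightarrow> Qmin \<le> Qlim s"
  unfolding Qmin_def by simp

lemma Qmax_ge: "s \<in> pairs \<Longrightarrow> Qlim s \<le> Qmax"
  unfolding Qmax_def by simp

lemma Qmin_pos: "0 < Qmin"
  unfolding Qmin_def using pairs_nonempty Qlim_pos by (subst Min_gr_iff) auto

lemma Qmax_pos: "0 < Qmax"
  using pairs_nonempty Qlim_pos Qmax_ge by (meson ex_in_conv less_le_trans)

definition offspring_rate :: real where
  "offspring_rate = 1 - cmin / Qmax"

lemma offspring_rate_lt_1: "offspring_rate < 1"
  unfolding offspring_rate_def using cmin_pos Qmax_pos by simp

lemma offspring_rate_nonneg: "0 \<le> offspring_rate"
proof -
  obtain q a where s: "(q, a) \<in> pairs"
    using pairs_nonempty by auto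
  then have "cmin \<le> Qmax"
    using cmin_le Qlim_ge_cost[OF s] Qmax_ge[OF s] by fastforce
  then show ?thesis
    unfolding offspring_rate_def using Qmax_pos by simp
qed

text \<open>Since every step costs at least \<open>cmin\<close>, the strictly positive vector \<open>Qlim\<close> is
  contracted by the offspring operator.\<close>

lemma offspring_Qlim_le: "s \<in> pairs \<Longrightarrow> offspring Qlim s \<le> offspring_rate * Qlim s"
proof -
  assume s: "s \<in> pairs"
  have "cmin * Qlim s / Qmax \<le> cmin"
    using Qmax_ge[OF s] Qmax_pos cmin_pos by (simp add: field_simps)
  moreover have "cmin \<le> c (fst s) (snd s)"
    using s cmin_le by (cases s) simp
  ultimately show ?thesis
    using Qlim_eq[OF s] unfolding offspring_rate_def by (simp add: algebra_simps)
qed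

lemma offspring_pow_Suc: "(offspring ^^ Suc k) f = offspring ((offspring ^^ k) f)"
  by simp

lemma offspring_pow_mono:
  "s \<in> pairs \<Longrightarrow> (\<And>t. t \<in> pairs \<Longrightarrow> f t \<le> g t) \<Longrightarrow> (offspring ^^ k) f s \<le> (offspring ^^ k) g s"
  by (induction k arbitrary: s) (simp_all only: offspring_pow_Suc, auto intro!: offspring_mono)

lemma offspring_pow_nonneg:
  "s \<in> pairs \<Longrightarrow> (\<And>t. t \<in> pairs \<Longrightarrow> 0 \<le> f t) \<Longrightarrow> 0 \<le> (offspring ^^ k) f s"
  by (induction k arbitrary: s) (simp_all only: offspring_pow_Suc, auto intro!: offspring_nonneg)

lemma offspring_pow_cmult: "(offspring ^^ k) (\<lambda>u. a * g u) s = a * (offspring ^^ k) g s"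
proof (induction k arbitrary: s)
  case (Suc k)
  have "(offspring ^^ Suc k) (\<lambda>u. a * g u) s = offspring (\<lambda>u. a * (offspring ^^ k) g u) s"
    unfolding offspring_pow_Suc using Suc.IH by (intro offspring_cong) simp
  then show ?case
    by (simp only: offspring_cmult offspring_pow_Suc)
qed simp

lemma offspring_pow_Qlim_le: "s \<in> pairs \<Longrightarrow> (offspring ^^ k) Qlim s \<le> offspring_rate ^ k * Qlim s"
proof (induction k arbitrary: s)
  case (Suc k)
  have "(offspring ^^ Suc k) Qlim s \<le> offspring (\<lambda>u. offspring_rate ^ k * Qlim u) s"
    unfolding offspring_pow_Suc using Suc.IH by (intro offspring_mono)
  also have "\<dots> = offspring_rate ^ k * offspring Qlim s"
    by (rule offspring_cmult)
  also have "\<dots> \<le> offspring_rate ^ k * (offspring_rate * Qlim s)"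
    using offspring_Qlim_le[OF Suc.prems] offspring_rate_nonneg by (intro mult_left_mono) auto
  finally show ?case by (simp add: algebra_simps)
qed simp

lemma offspring_pow_linear:
  "s \<in> pairs \<Longrightarrow> (offspring ^^ k) f s = (\<Sum>t\<in>pairs. f t * (offspring ^^ k) (\<lambda>u. of_bool (u = t)) s)"
proof (induction k arbitrary: s)
  case 0
  then show ?case by (simp add: if_distrib cong: if_cong)
next
  case (Suc k)
  have "(offspring ^^ Suc k) f s
      = offspring (\<lambda>u. \<Sum>t\<in>pairs. f t * (offspring ^^ k) (\<lambda>u. of_bool (u = t)) u) s"
    unfolding offspring_pow_Suc using Suc.IH by (intro offspring_cong)
  also have "\<dots> = (\<Sum>t\<in>pairs. f t * (offspring ^^ Suc k) (\<lambda>u. of_bool (u = t)) s)"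
    by (simp only: offspring_sum offspring_cmult offspring_pow_Suc)
  finally show ?case .
qed

lemma offspring_pow_le_geometric:
  assumes s: "s \<in> pairs" and f: "\<And>t. t \<in> pairs \<Longrightarrow> 0 \<le> f t"
  shows "(offspring ^^ k) f s \<le> (\<Sum>t\<in>pairs. f t) / Qmin * Qmax * offspring_rate ^ k"
proof -
  let ?C = "(\<Sum>t\<in>pairs. f t) / Qmin"
  have C: "0 \<le> ?C"
    using Qmin_pos f by (simp add: sum_nonneg)
  have "f t \<le> ?C * Qlim t" if t: "t \<in> pairs" for t
  proof -
    have "f t \<le> (\<Sum>t\<in>pairs. f t)"
      using t f by (intro member_le_sum) auto
    also have "\<dots> \<le> ?C * Qlim t"
      using Qmin_le[OF t] Qmin_pos sum_nonneg[of pairs f] f by (simp add: field_simps mult_left_mono)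
    finally show ?thesis .
  qed
  then have "(offspring ^^ k) f s \<le> ?C * (offspring ^^ k) Qlim s"
    using offspring_pow_mono[OF s] by (simp add: offspring_pow_cmult[symmetric])
  also have "\<dots> \<le> ?C * (offspring_rate ^ k * Qmax)"
  proof (rule mult_left_mono[OF _ C])
    have "offspring_rate ^ k * Qlim s \<le> offspring_rate ^ k * Qmax"
      using Qmax_ge[OF s] offspring_rate_nonneg by (intro mult_left_mono) auto
    then show "(offspring ^^ k) Qlim s \<le> offspring_rate ^ k * Qmax"
      using offspring_pow_Qlim_le[OF s, of k] by linarith
  qed
  finally show ?thesis by (simp add: algebra_simps)
qed

lemma summable_offspring_pow:
  assumes s: "s \<in> pairs" and f: "\<And>t. t \<in> pairs \<Longrightarrow> 0 \<le> f t"
  shows "summable (\<lambda>k. (offspring ^^ k) f s)"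
proof (rule summable_comparison_test')
  show "summable (\<lambda>k. (\<Sum>t\<in>pairs. f t) / Qmin * Qmax * offspring_rate ^ k)"
    using offspring_rate_nonneg offspring_rate_lt_1 by (intro summable_mult summable_geometric) auto
  show "norm ((offspring ^^ k) f s) \<le> (\<Sum>t\<in>pairs. f t) / Qmin * Qmax * offspring_rate ^ k" for k
    using offspring_pow_nonneg[OF s f] offspring_pow_le_geometric[OF s f] by simp
qed

end

lemma mult_le_weighted_squares:
  fixes x y u v :: real
  assumes "0 < u" "0 < v"
  shows "x * y \<le> (x\<^sup>2 * v / u + y\<^sup>2 * u / v) / 2"
proof -
  have "0 \<le> (x * v - y * u)\<^sup>2" by simp
  then have "x * y * (2 * u * v) \<le> x\<^sup>2 * v\<^sup>2 + y\<^sup>2 * u\<^sup>2"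
    by (simp add: power2_eq_square algebra_simps)
  then show ?thesis
    using assms by (simp add: field_simps power2_eq_square)
qed

context finite_Qstar_bmdp
begin

definition offspring_total :: "('q \<times> 'a \<Rightarrow> real) \<Rightarrow> real" where
  "offspring_total f = (\<Sum>k. \<Sum>s\<in>pairs. (offspring ^^ k) f s)"

definition weight :: "'q \<times> 'a \<Rightarrow> real" where
  "weight t = offspring_total (\<lambda>u. of_bool (u = t))"

lemma summable_offspring_total:
  "(\<And>t. t \<in> pairs \<Longrightarrow> 0 \<le> f t) \<Longrightarrow> summable (\<lambda>k. \<Sum>s\<in>pairs. (offspring ^^ k) f s)"
  by (intro summable_sum summable_offspring_pow)

lemma offspring_total_eq_weighted_sum:
  assumes f: "\<And>t. t \<in> pairs \<Longrightarrow> 0 \<le> f t"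
  shows "offspring_total f = (\<Sum>t\<in>pairs. weight t * f t)"
proof -
  have "(\<Sum>s\<in>pairs. (offspring ^^ k) f s)
      = (\<Sum>t\<in>pairs. f t * (\<Sum>s\<in>pairs. (offspring ^^ k) (\<lambda>u. of_bool (u = t)) s))" for k
  proof -
    have "(\<Sum>s\<in>pairs. (offspring ^^ k) f s)
        = (\<Sum>s\<in>pairs. \<Sum>t\<in>pairs. f t * (offspring ^^ k) (\<lambda>u. of_bool (u = t)) s)"
      by (intro sum.cong refl offspring_pow_linear)
    also have "\<dots> = (\<Sum>t\<in>pairs. \<Sum>s\<in>pairs. f t * (offspring ^^ k) (\<lambda>u. of_bool (u = t)) s)"
      by (rule sum.swap)
    finally show ?thesis
      by (simp add: sum_distrib_left)
  qed
  then have "offspring_total f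
      = (\<Sum>k. \<Sum>t\<in>pairs. f t * (\<Sum>s\<in>pairs. (offspring ^^ k) (\<lambda>u. of_bool (u = t)) s))"
    unfolding offspring_total_def by simp
  also have "\<dots> = (\<Sum>t\<in>pairs. \<Sum>k. f t * (\<Sum>s\<in>pairs. (offspring ^^ k) (\<lambda>u. of_bool (u = t)) s))"
    by (intro suminf_sum summable_mult summable_offspring_total) simp
  also have "\<dots> = (\<Sum>t\<in>pairs. f t * weight t)"
    unfolding weight_def offspring_total_def
    by (intro sum.cong refl suminf_mult summable_offspring_total) simp
  finally show ?thesis
    by (simp add: mult.commute)
qed

lemma offspring_total_offspring:
  assumes f: "\<And>t. t \<in> pairs \<Longrightarrow> 0 \<le> f t"
  shows "offspring_total (offspring f) = offspring_total f - (\<Sum>s\<in>pairs. f s)"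
proof -
  have "offspring_total (offspring f) = (\<Sum>k. \<Sum>s\<in>pairs. (offspring ^^ Suc k) f s)"
    unfolding offspring_total_def funpow_Suc_right by simp
  also have "\<dots> = offspring_total f - (\<Sum>s\<in>pairs. f s)"
    unfolding offspring_total_def using suminf_split_head[OF summable_offspring_total[OF f]] by simp
  finally show ?thesis .
qed

lemma weight_ge_1: "t \<in> pairs \<Longrightarrow> 1 \<le> weight t"
proof -
  assume t: "t \<in> pairs"
  let ?e = "\<lambda>u. of_bool (u = t) :: real"
  have "0 \<le> offspring_total (offspring ?e)"
    unfolding offspring_total_def
    by (intro suminf_nonneg summable_offspring_total offspring_nonneg sum_nonneg offspring_pow_nonneg)
      auto
  then show ?thesis
    using t offspring_total_offspring[of ?e] unfolding weight_def by simp
qed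

definition weight_max :: real where
  "weight_max = Max (weight ` pairs)"

lemma weight_max_ge: "t \<in> pairs \<Longrightarrow> weight t \<le> weight_max"
  unfolding weight_max_def by simp

lemma weight_max_ge_1: "1 \<le> weight_max"
  using pairs_nonempty weight_ge_1 weight_max_ge by (meson all_not_in_conv order_trans)

definition dual_rate :: real where
  "dual_rate = 1 - 1 / weight_max"

lemma dual_rate_lt_1: "dual_rate < 1"
  unfolding dual_rate_def using weight_max_ge_1 by simp

lemma weighted_sum_offspring_le:
  assumes f: "\<And>t. t \<in> pairs \<Longrightarrow> 0 \<le> f t"
  shows "(\<Sum>t\<in>pairs. weight t * offspring f t) \<le> dual_rate * (\<Sum>t\<in>pairs. weight t * f t)"
proof -
  have "(\<Sum>t\<in>pairs. weight t * f t) \<le> (\<Sum>t\<in>pairs. weight_max * f t)"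
    using f weight_max_ge by (intro sum_mono mult_right_mono) auto
  then have "(\<Sum>t\<in>pairs. weight t * f t) / weight_max \<le> (\<Sum>t\<in>pairs. f t)"
    using weight_max_ge_1 by (simp add: sum_distrib_right[symmetric] field_simps mult.commute)
  moreover have "(\<Sum>t\<in>pairs. weight t * offspring f t) = (\<Sum>t\<in>pairs. weight t * f t) - (\<Sum>t\<in>pairs. f t)"
    using offspring_total_eq_weighted_sum[of "offspring f"] offspring_total_offspring[OF f]
      offspring_total_eq_weighted_sum[OF f] f
    by (simp add: offspring_nonneg)
  ultimately show ?thesis
    unfolding dual_rate_def by (simp add: algebra_simps)
qed

definition lyap_weight :: "'q \<times> 'a \<Rightarrow> real" where
  "lyap_weight s = weight s / Qlim s"

lemma lyap_weight_pos: "s \<in> pairs \<Longrightarrow> 0 < lyap_weight s"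
  unfolding lyap_weight_def using weight_ge_1[of s] Qlim_pos[of s] by simp

definition drift_rate :: real where
  "drift_rate = (offspring_rate + dual_rate) / 2"

lemma drift_rate_lt_1: "drift_rate < 1"
  unfolding drift_rate_def using offspring_rate_lt_1 dual_rate_lt_1 by simp

lemma lyap_weight_cross_term_pointwise_le:
  assumes s: "s \<in> pairs"
  shows "lyap_weight s * z s * offspring z s
    \<le> offspring_rate / 2 * (lyap_weight s * (z s)\<^sup>2) + weight s * offspring (\<lambda>u. (z u)\<^sup>2 / Qlim u) s / 2"
proof -
  let ?f = "\<lambda>u. (z u)\<^sup>2 / Qlim u"
  have "z s * offspring z s = offspring (\<lambda>u. z s * z u) s"
    by (simp add: offspring_cmult)
  also have "\<dots> \<le> offspring (\<lambda>u. ((z s)\<^sup>2 / Qlim s / 2) * Qlim u + (Qlim s / 2) * ?f u) s"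
  proof (rule offspring_mono)
    fix t assume t: "t \<in> pairs"
    show "z s * z t \<le> ((z s)\<^sup>2 / Qlim s / 2) * Qlim t + (Qlim s / 2) * ?f t"
      using mult_le_weighted_squares[OF Qlim_pos[OF s] Qlim_pos[OF t], of "z s" "z t"]
      by (simp add: field_simps)
  qed
  also have "\<dots> = ((z s)\<^sup>2 / Qlim s / 2) * offspring Qlim s + (Qlim s / 2) * offspring ?f s"
    by (simp only: offspring_add offspring_cmult)
  also have "\<dots> \<le> ((z s)\<^sup>2 / Qlim s / 2) * (offspring_rate * Qlim s) + (Qlim s / 2) * offspring ?f s"
    using offspring_Qlim_le[OF s] Qlim_pos[OF s] by (intro add_right_mono mult_left_mono) auto
  finally have "lyap_weight s * (z s * offspring z s)
      \<le> lyap_weight s * (((z s)\<^sup>2 / Qlim s / 2) * (offspring_rate * Qlim s) + (Qlim s / 2) * offspring ?f s)"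
    using lyap_weight_pos[OF s] by (intro mult_left_mono) auto
  then show ?thesis
    unfolding lyap_weight_def using Qlim_pos[OF s] by (simp add: field_simps)
qed

text \<open>The right contraction by \<open>Qlim\<close> and the left contraction by \<open>weight\<close> combine, through
  \<open>z s z t \<le> (z s\<^sup>2 Qlim t / Qlim s + z t\<^sup>2 Qlim s / Qlim t) / 2\<close>, into a contraction of the
  quadratic form with coefficients \<open>lyap_weight\<close>.\<close>

lemma lyap_weight_cross_term_le:
  assumes z: "\<And>t. t \<in> pairs \<Longrightarrow> 0 \<le> z t"
  shows "(\<Sum>s\<in>pairs. lyap_weight s * z s * offspring z s) \<le> drift_rate * (\<Sum>s\<in>pairs. lyap_weight s * (z s)\<^sup>2)"
proof -
  define f where "f u = (z u)\<^sup>2 / Qlim u" for u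
  have f: "0 \<le> f t" if "t \<in> pairs" for t
    unfolding f_def using Qlim_pos[OF that] by simp
  have "(\<Sum>s\<in>pairs. lyap_weight s * z s * offspring z s)
      \<le> (\<Sum>s\<in>pairs. offspring_rate / 2 * (lyap_weight s * (z s)\<^sup>2) + weight s * offspring f s / 2)"
    unfolding f_def by (intro sum_mono lyap_weight_cross_term_pointwise_le)
  also have "\<dots> = offspring_rate / 2 * (\<Sum>s\<in>pairs. lyap_weight s * (z s)\<^sup>2)
      + (\<Sum>s\<in>pairs. weight s * offspring f s) / 2"
    by (simp add: sum.distrib sum_distrib_left sum_divide_distrib)
  also have "\<dots> \<le> offspring_rate / 2 * (\<Sum>s\<in>pairs. lyap_weight s * (z s)\<^sup>2)
      + dual_rate * (\<Sum>s\<in>pairs. weight s * f s) / 2"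
    using weighted_sum_offspring_le[OF f] by simp
  also have "(\<Sum>s\<in>pairs. weight s * f s) = (\<Sum>s\<in>pairs. lyap_weight s * (z s)\<^sup>2)"
    unfolding f_def lyap_weight_def by (simp add: field_simps)
  finally show ?thesis
    unfolding drift_rate_def by (simp add: field_simps)
qed

end

section \<open>A quadratic Lyapunov function for Q-learning\<close>

locale bmdp_qlearning = finite_Qstar_bmdp Act p c
  for Act :: "'q::finite \<Rightarrow> 'a::finite set" and p c +
  fixes sel :: "('q \<times> 'a) pmf" and pmin :: real and lr :: "nat \<Rightarrow> real"
  assumes sel_support: "set_pmf sel \<subseteq> {(q, a). a \<in> Act q}"
    and pmin_pos: "0 < pmin"
    and sel_ge_pmin: "\<forall>q. \<forall>a\<in>Act q. pmin \<le> pmf sel (q, a)"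
    and lr_bounds: "\<forall>i. 0 \<le> lr i \<and> lr i \<le> 1"
    and lr_not_summable: "\<not> summable lr"
    and lr_square_summable: "summable (\<lambda>i. (lr i)\<^sup>2)"
begin

lemma lr_nonneg: "0 \<le> lr i" and lr_le_1: "lr i \<le> 1"
  using lr_bounds by auto

lemma pmin_le_sel: "s \<in> pairs \<Longrightarrow> pmin \<le> pmf sel s"
  using sel_ge_pmin by (cases s) auto

lemma sel_pos: "s \<in> pairs \<Longrightarrow> 0 < pmf sel s"
  using pmin_le_sel pmin_pos by (meson less_le_trans)

lemma sum_sel: "(\<Sum>s\<in>pairs. pmf sel s) = 1"
  using sum_pmf_eq_1[of pairs sel] sel_support by (simp add: pairs_def)

definition step_expect :: "(('q \<times> 'a) \<times> 'q list \<Rightarrow> real) \<Rightarrow> real" where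
  "step_expect f = (\<Sum>s\<in>pairs. pmf sel s * expect (fst s) (snd s) (\<lambda>\<beta>. f (s, \<beta>)))"

lemma nn_integral_step_dist:
  assumes f: "\<And>x. 0 \<le> f x"
  shows "(\<integral>\<^sup>+x. ennreal (f x) \<partial>measure_pmf (step_dist p sel)) = ennreal (step_expect f)"
proof -
  have "(\<integral>\<^sup>+x. ennreal (f x) \<partial>measure_pmf (step_dist p sel))
      = (\<integral>\<^sup>+s. (\<integral>\<^sup>+\<beta>. ennreal (f (s, \<beta>)) \<partial>measure_pmf (p (fst s) (snd s))) \<partial>measure_pmf sel)"
    unfolding step_dist_def by simp
  also have "\<dots> = (\<integral>\<^sup>+s. ennreal (expect (fst s) (snd s) (\<lambda>\<beta>. f (s, \<beta>))) \<partial>measure_pmf sel)"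
    using sel_support f
    by (intro nn_integral_cong_AE) (auto simp: AE_measure_pmf_iff intro!: nn_integral_eq_expect)
  also have "\<dots> = (\<Sum>s\<in>pairs. ennreal (expect (fst s) (snd s) (\<lambda>\<beta>. f (s, \<beta>))) * pmf sel s)"
    using sel_support by (intro nn_integral_measure_pmf_support) (auto simp: pairs_def)
  also have "\<dots> = ennreal (step_expect f)"
    unfolding step_expect_def using f
    by (subst sum_ennreal[symmetric])
      (auto simp: ennreal_mult' mult.commute intro!: sum.cong expect_nonneg mult_nonneg_nonneg)
  finally show ?thesis .
qed

lemma step_expect_mono:
  "(\<And>s \<beta>. s \<in> pairs \<Longrightarrow> f (s, \<beta>) \<le> g (s, \<beta>)) \<Longrightarrow> step_expect f \<le> step_expect g"
  unfolding step_expect_def by (intro sum_mono mult_left_mono expect_mono) auto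

lemma step_expect_affine: "step_expect (\<lambda>x. a * f x + b) = a * step_expect f + b"
proof -
  have "step_expect (\<lambda>x. a * f x + b)
      = (\<Sum>s\<in>pairs. pmf sel s * (a * expect (fst s) (snd s) (\<lambda>\<beta>. f (s, \<beta>)) + b))"
    unfolding step_expect_def
    by (intro sum.cong refl) (auto simp: expect_add expect_cmult expect_const pairs_iff)
  also have "\<dots> = a * step_expect f + b * (\<Sum>s\<in>pairs. pmf sel s)"
    unfolding step_expect_def by (simp add: algebra_simps sum.distrib sum_distrib_left)
  finally show ?thesis
    by (simp add: sum_sel)
qed

text \<open>Dividing by the selection probabilities makes the drift of the Lyapunov function
  under one random Q-learning update proportional to \<open>lyap_weight\<close>.\<close>

definition lyap_coeff :: "'q \<times> 'a \<Rightarrow> real" where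
  "lyap_coeff s = lyap_weight s / pmf sel s"

lemma lyap_coeff_pos: "s \<in> pairs \<Longrightarrow> 0 < lyap_coeff s"
  unfolding lyap_coeff_def using lyap_weight_pos sel_pos by simp

lemma sel_mult_lyap_coeff: "s \<in> pairs \<Longrightarrow> pmf sel s * lyap_coeff s = lyap_weight s"
  unfolding lyap_coeff_def using sel_pos[of s] by simp

definition excess :: "('q \<times> 'a \<Rightarrow> real) \<Rightarrow> 'q \<times> 'a \<Rightarrow> real" where
  "excess U s = max (U s - Qlim s) 0"

lemma excess_nonneg: "0 \<le> excess U s"
  unfolding excess_def by simp

lemma excess_ge: "U s - Qlim s \<le> excess U s"
  unfolding excess_def by simp

definition lyap :: "('q \<times> 'a \<Rightarrow> real) \<Rightarrow> real" where
  "lyap U = (\<Sum>s\<in>pairs. lyap_coeff s * (excess U s)\<^sup>2)"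

lemma lyap_nonneg: "0 \<le> lyap U"
  unfolding lyap_def using lyap_coeff_pos by (intro sum_nonneg mult_nonneg_nonneg) (auto intro: less_imp_le)

lemma lyap_ge_excess: "s \<in> pairs \<Longrightarrow> lyap_coeff s * (excess U s)\<^sup>2 \<le> lyap U"
  unfolding lyap_def using lyap_coeff_pos
  by (intro member_le_sum[where f="\<lambda>t. lyap_coeff t * (excess U t)\<^sup>2"])
    (auto intro!: mult_nonneg_nonneg intro: less_imp_le)

lemma lyap_fun_upd:
  assumes s: "s \<in> pairs"
  shows "lyap (U(s := v)) = lyap U - lyap_coeff s * (excess U s)\<^sup>2 + lyap_coeff s * (max (v - Qlim s) 0)\<^sup>2"
proof -
  have "lyap (U(s := v)) = lyap_coeff s * (max (v - Qlim s) 0)\<^sup>2 + (\<Sum>t\<in>pairs - {s}. lyap_coeff t * (excess U t)\<^sup>2)"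
    unfolding lyap_def excess_def using s by (subst sum.remove[OF finite s]) (auto intro!: sum.cong)
  moreover have "lyap U = lyap_coeff s * (excess U s)\<^sup>2 + (\<Sum>t\<in>pairs - {s}. lyap_coeff t * (excess U t)\<^sup>2)"
    unfolding lyap_def using s by (subst sum.remove[OF finite s]) auto
  ultimately show ?thesis by simp
qed

definition td_error :: "('q \<times> 'a \<Rightarrow> real) \<Rightarrow> 'q \<times> 'a \<Rightarrow> 'q list \<Rightarrow> real" where
  "td_error U s \<beta> = c (fst s) (snd s) + (\<Sum>x\<leftarrow>\<beta>. U (x, greedy x)) - U s"

text \<open>Q-learning in which every child is evaluated with the greedy action instead of the
  minimising one; it dominates the actual Q-learning process.\<close>

definition greedy_step :: "nat \<Rightarrow> ('q \<times> 'a \<Rightarrow> real) \<Rightarrow> ('q \<times> 'a) \<times> 'q list \<Rightarrow> ('q \<times> 'a \<Rightarrow> real)" where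
  "greedy_step i U x = U(fst x := U (fst x) + lr i * td_error U (fst x) (snd x))"

lemma max_add_0_square_le: "(max (t + h) 0)\<^sup>2 \<le> (max t 0 + h)\<^sup>2" for t h :: real
  by (cases "t + h \<le> 0") (auto simp: max_def power2_eq_square intro: mult_mono)

lemma lyap_greedy_step_le:
  assumes s: "s \<in> pairs"
  shows "lyap (greedy_step i U (s, \<beta>)) \<le> lyap U + lyap_coeff s *
    (2 * lr i * excess U s * td_error U s \<beta> + (lr i)\<^sup>2 * (td_error U s \<beta>)\<^sup>2)"
proof -
  let ?X = "td_error U s \<beta>"
  have "(max (U s + lr i * ?X - Qlim s) 0)\<^sup>2 \<le> (excess U s + lr i * ?X)\<^sup>2"
    using max_add_0_square_le[of "U s - Qlim s" "lr i * ?X"] unfolding excess_def by (simp add: algebra_simps)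
  then have "lyap (greedy_step i U (s, \<beta>)) \<le> lyap U - lyap_coeff s * (excess U s)\<^sup>2 + lyap_coeff s * (excess U s + lr i * ?X)\<^sup>2"
    using lyap_fun_upd[OF s, of U] lyap_coeff_pos[OF s] by (simp add: greedy_step_def)
  then show ?thesis
    by (simp add: power2_eq_square algebra_simps)
qed

lemma expect_td_error:
  assumes s: "s \<in> pairs"
  shows "expect (fst s) (snd s) (td_error U s) = offspring (\<lambda>u. U u - Qlim u) s - (U s - Qlim s)"
proof -
  have "expect (fst s) (snd s) (td_error U s)
      = expect (fst s) (snd s) (\<lambda>\<beta>. (c (fst s) (snd s) - U s) + (\<Sum>x\<leftarrow>\<beta>. U (x, greedy x)))"
    unfolding td_error_def by (simp add: algebra_simps)
  also have "\<dots> = c (fst s) (snd s) - U s + offspring U s"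
    using s by (simp add: expect_add expect_const offspring_def pairs_iff)
  finally show ?thesis
    using Qlim_eq[OF s] by (simp add: offspring_diff)
qed

end

lemma square_add_le: "(a + b)\<^sup>2 \<le> 2 * a\<^sup>2 + 2 * b\<^sup>2" for a b :: real
  using zero_le_power2[of "a - b"] by (simp add: power2_eq_square algebra_simps)

context bmdp_qlearning
begin

definition len_max :: nat where
  "len_max = Max (\<Union>s\<in>pairs. length ` set_pmf (p (fst s) (snd s)))"

lemma length_le_len_max: "s \<in> pairs \<Longrightarrow> \<beta> \<in> set_pmf (p (fst s) (snd s)) \<Longrightarrow> length \<beta> \<le> len_max"
  unfolding len_max_def by (rule Max_ge) (auto intro!: finite_UN_I finite_transitions simp: pairs_iff)

definition cmax :: real where
  "cmax = Max ((\<lambda>s. c (fst s) (snd s)) ` pairs)"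

lemma cost_le_cmax: "s \<in> pairs \<Longrightarrow> c (fst s) (snd s) \<le> cmax"
  unfolding cmax_def by simp

definition lyap_coeff_min :: real where
  "lyap_coeff_min = Min (lyap_coeff ` pairs)"

lemma lyap_coeff_min_le: "s \<in> pairs \<Longrightarrow> lyap_coeff_min \<le> lyap_coeff s"
  unfolding lyap_coeff_min_def by simp

lemma lyap_coeff_min_pos: "0 < lyap_coeff_min"
  unfolding lyap_coeff_min_def using pairs_nonempty lyap_coeff_pos by (subst Min_gr_iff) auto

definition td_bound :: real where
  "td_bound = cmax + (real len_max + 1) * Qmax"

definition K1 :: real where
  "K1 = (\<Sum>s\<in>pairs. lyap_weight s) * 2 * td_bound\<^sup>2"

definition K2 :: real where
  "K2 = (\<Sum>s\<in>pairs. lyap_weight s) * 2 * (real len_max + 1)\<^sup>2 * card pairs / lyap_coeff_min"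

lemma sum_lyap_weight_nonneg: "0 \<le> (\<Sum>s\<in>pairs. lyap_weight s)"
  using lyap_weight_pos by (intro sum_nonneg) (auto intro: less_imp_le)

lemma K1_nonneg: "0 \<le> K1"
  unfolding K1_def using sum_lyap_weight_nonneg by simp

lemma K2_nonneg: "0 \<le> K2"
  unfolding K2_def using sum_lyap_weight_nonneg lyap_coeff_min_pos by simp

lemma abs_td_error_le:
  assumes U: "\<And>t. t \<in> pairs \<Longrightarrow> 0 \<le> U t"
    and s: "s \<in> pairs" and \<beta>: "\<beta> \<in> set_pmf (p (fst s) (snd s))"
  shows "\<bar>td_error U s \<beta>\<bar> \<le> td_bound + (real len_max + 1) * (\<Sum>t\<in>pairs. excess U t)"
proof -
  let ?Z = "\<Sum>t\<in>pairs. excess U t"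
  have Z: "0 \<le> ?Z"
    by (intro sum_nonneg excess_nonneg)
  have U_le: "U t \<le> ?Z + Qmax" if t: "t \<in> pairs" for t
    using member_le_sum[OF t, of "excess U"] excess_nonneg excess_ge[of U t] Qmax_ge[OF t] by force
  have "(\<Sum>x\<leftarrow>\<beta>. U (x, greedy x)) \<le> (\<Sum>x\<leftarrow>\<beta>. ?Z + Qmax)"
    using U_le by (intro sum_list_mono) simp
  also have "\<dots> \<le> real len_max * (?Z + Qmax)"
    using length_le_len_max[OF s \<beta>] Z Qmax_pos by (simp add: sum_list_triv mult_right_mono)
  finally have upper: "(\<Sum>x\<leftarrow>\<beta>. U (x, greedy x)) \<le> real len_max * (?Z + Qmax)" .
  have lower: "0 \<le> (\<Sum>x\<leftarrow>\<beta>. U (x, greedy x))"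
    using U by (intro sum_list_map_nonneg) simp
  have "0 \<le> c (fst s) (snd s)"
    using cost_pos' s by (simp add: less_imp_le)
  then show ?thesis
    using upper lower cost_le_cmax[OF s] U[OF s] U_le[OF s] Z Qmax_pos
    unfolding td_error_def td_bound_def abs_le_iff by (simp add: algebra_simps)
qed

lemma td_error_square_le:
  assumes U: "\<And>t. t \<in> pairs \<Longrightarrow> 0 \<le> U t"
    and s: "s \<in> pairs" and \<beta>: "\<beta> \<in> set_pmf (p (fst s) (snd s))"
  shows "(td_error U s \<beta>)\<^sup>2 \<le> 2 * td_bound\<^sup>2 + 2 * (real len_max + 1)\<^sup>2 * card pairs * lyap U / lyap_coeff_min"
proof -
  let ?Z = "\<Sum>t\<in>pairs. excess U t"
  have "(td_error U s \<beta>)\<^sup>2 = \<bar>td_error U s \<beta>\<bar>\<^sup>2"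
    by simp
  also have "\<dots> \<le> (td_bound + (real len_max + 1) * ?Z)\<^sup>2"
    using abs_td_error_le[OF U s \<beta>] by (intro power_mono) auto
  also have "\<dots> \<le> 2 * td_bound\<^sup>2 + 2 * ((real len_max + 1) * ?Z)\<^sup>2"
    by (rule square_add_le)
  finally have "(td_error U s \<beta>)\<^sup>2 \<le> 2 * td_bound\<^sup>2 + 2 * (real len_max + 1)\<^sup>2 * ?Z\<^sup>2"
    by (simp add: power_mult_distrib)
  moreover have "?Z\<^sup>2 \<le> lyap U / lyap_coeff_min * card pairs"
  proof -
    have "lyap_coeff_min * (\<Sum>t\<in>pairs. (excess U t)\<^sup>2) \<le> lyap U"
      unfolding lyap_def sum_distrib_left using lyap_coeff_min_le
      by (intro sum_mono mult_right_mono) auto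
    then have "(\<Sum>t\<in>pairs. (excess U t)\<^sup>2) \<le> lyap U / lyap_coeff_min"
      using lyap_coeff_min_pos by (simp add: field_simps)
    then show ?thesis
      using sum_squared_le_sum_of_squares[of "excess U" pairs]
      by (meson mult_right_mono of_nat_0_le_iff order_trans)
  qed
  then have "2 * (real len_max + 1)\<^sup>2 * ?Z\<^sup>2 \<le> 2 * (real len_max + 1)\<^sup>2 * (lyap U / lyap_coeff_min * card pairs)"
    by (intro mult_left_mono) auto
  ultimately show ?thesis
    by (simp add: field_simps)
qed

definition drift_gain :: real where
  "drift_gain = (1 - drift_rate) * pmin"

lemma drift_gain_pos: "0 < drift_gain"
  unfolding drift_gain_def using drift_rate_lt_1 pmin_pos by simp

lemma lyap_first_order_le:
  "(\<Sum>s\<in>pairs. lyap_weight s * excess U s * expect (fst s) (snd s) (td_error U s))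
    \<le> - drift_gain * lyap U"
proof -
  let ?z = "excess U"
  have "lyap_weight s * ?z s * expect (fst s) (snd s) (td_error U s)
      \<le> lyap_weight s * ?z s * offspring ?z s - lyap_weight s * (?z s)\<^sup>2" if s: "s \<in> pairs" for s
  proof -
    have "expect (fst s) (snd s) (td_error U s) \<le> offspring ?z s - (U s - Qlim s)"
      unfolding expect_td_error[OF s] by (intro diff_right_mono offspring_mono excess_ge)
    then have "?z s * expect (fst s) (snd s) (td_error U s) \<le> ?z s * (offspring ?z s - (U s - Qlim s))"
      by (intro mult_left_mono excess_nonneg)
    also have "\<dots> = ?z s * offspring ?z s - (?z s)\<^sup>2"
      unfolding excess_def by (simp add: max_def power2_eq_square algebra_simps)
    finally show ?thesis
      using lyap_weight_pos[OF s] mult_left_mono by (fastforce simp: algebra_simps)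
  qed
  then have "(\<Sum>s\<in>pairs. lyap_weight s * ?z s * expect (fst s) (snd s) (td_error U s))
      \<le> (\<Sum>s\<in>pairs. lyap_weight s * ?z s * offspring ?z s) - (\<Sum>s\<in>pairs. lyap_weight s * (?z s)\<^sup>2)"
    by (simp add: sum_subtractf[symmetric] sum_mono)
  also have "\<dots> \<le> (drift_rate - 1) * (\<Sum>s\<in>pairs. lyap_weight s * (?z s)\<^sup>2)"
    using lyap_weight_cross_term_le[of ?z] excess_nonneg by (simp add: algebra_simps)
  also have "\<dots> \<le> (drift_rate - 1) * (pmin * lyap U)"
  proof (rule mult_left_mono_neg)
    have "pmin * lyap U = (\<Sum>s\<in>pairs. pmin * lyap_coeff s * (?z s)\<^sup>2)"
      unfolding lyap_def by (simp add: sum_distrib_left algebra_simps)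
    also have "\<dots> \<le> (\<Sum>s\<in>pairs. lyap_weight s * (?z s)\<^sup>2)"
      using pmin_le_sel lyap_coeff_pos sel_mult_lyap_coeff
      by (intro sum_mono mult_right_mono) (metis less_imp_le mult_right_mono, simp)
    finally show "pmin * lyap U \<le> (\<Sum>s\<in>pairs. lyap_weight s * (?z s)\<^sup>2)" .
  qed (use drift_rate_lt_1 in simp)
  finally show ?thesis
    unfolding drift_gain_def by (simp add: algebra_simps)
qed

lemma lyap_second_order_le:
  assumes U: "\<And>t. t \<in> pairs \<Longrightarrow> 0 \<le> U t"
  shows "(\<Sum>s\<in>pairs. lyap_weight s * expect (fst s) (snd s) (\<lambda>\<beta>. (td_error U s \<beta>)\<^sup>2))
    \<le> K1 + K2 * lyap U"
proof -
  let ?B = "2 * td_bound\<^sup>2 + 2 * (real len_max + 1)\<^sup>2 * card pairs * lyap U / lyap_coeff_min"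
  have "expect (fst s) (snd s) (\<lambda>\<beta>. (td_error U s \<beta>)\<^sup>2) \<le> ?B" if s: "s \<in> pairs" for s
  proof -
    have "expect (fst s) (snd s) (\<lambda>\<beta>. (td_error U s \<beta>)\<^sup>2) \<le> expect (fst s) (snd s) (\<lambda>_. ?B)"
      using td_error_square_le[OF U s] by (intro expect_mono)
    then show ?thesis
      using s by (simp add: expect_const pairs_iff)
  qed
  then have "(\<Sum>s\<in>pairs. lyap_weight s * expect (fst s) (snd s) (\<lambda>\<beta>. (td_error U s \<beta>)\<^sup>2))
      \<le> (\<Sum>s\<in>pairs. lyap_weight s * ?B)"
    using lyap_weight_pos by (intro sum_mono mult_left_mono) (auto intro: less_imp_le)
  also have "\<dots> = K1 + K2 * lyap U"
    unfolding K1_def K2_def sum_distrib_right[symmetric] using lyap_coeff_min_pos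
    by (simp add: field_simps)
  finally show ?thesis .
qed

lemma lyap_drift:
  assumes U: "\<And>t. t \<in> pairs \<Longrightarrow> 0 \<le> U t"
  shows "step_expect (\<lambda>x. lyap (greedy_step i U x))
    \<le> (1 - 2 * drift_gain * lr i + K2 * (lr i)\<^sup>2) * lyap U + K1 * (lr i)\<^sup>2"
proof -
  let ?l = "lr i" and ?z = "excess U" and ?X = "td_error U"
  let ?E1 = "\<lambda>s. expect (fst s) (snd s) (?X s)"
  let ?E2 = "\<lambda>s. expect (fst s) (snd s) (\<lambda>\<beta>. (?X s \<beta>)\<^sup>2)"
  have "step_expect (\<lambda>x. lyap (greedy_step i U x)) \<le> step_expect (\<lambda>x. lyap U +
      lyap_coeff (fst x) * (2 * ?l * ?z (fst x) * ?X (fst x) (snd x) + ?l\<^sup>2 * (?X (fst x) (snd x))\<^sup>2))"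
    by (intro step_expect_mono) (simp add: lyap_greedy_step_le)
  also have "\<dots> = (\<Sum>s\<in>pairs. pmf sel s * lyap U + 2 * ?l * (lyap_weight s * ?z s * ?E1 s)
      + ?l\<^sup>2 * (lyap_weight s * ?E2 s))"
    unfolding step_expect_def
  proof (intro sum.cong refl)
    fix s assume s: "s \<in> pairs"
    have "expect (fst s) (snd s) (\<lambda>\<beta>. lyap U + lyap_coeff s * (2 * ?l * ?z s * ?X s \<beta> + ?l\<^sup>2 * (?X s \<beta>)\<^sup>2))
        = lyap U + lyap_coeff s * (2 * ?l * ?z s * ?E1 s + ?l\<^sup>2 * ?E2 s)"
      using s by (simp add: expect_add expect_const expect_cmult pairs_iff distrib_left mult.assoc)
    then show "pmf sel s * expect (fst s) (snd s) (\<lambda>\<beta>. lyap U + lyap_coeff (fst (s, \<beta>)) *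
        (2 * ?l * ?z (fst (s, \<beta>)) * ?X (fst (s, \<beta>)) (snd (s, \<beta>)) + ?l\<^sup>2 * (?X (fst (s, \<beta>)) (snd (s, \<beta>)))\<^sup>2))
      = pmf sel s * lyap U + 2 * ?l * (lyap_weight s * ?z s * ?E1 s) + ?l\<^sup>2 * (lyap_weight s * ?E2 s)"
      using sel_mult_lyap_coeff[OF s, symmetric] by (simp add: algebra_simps)
  qed
  also have "\<dots> = lyap U + 2 * ?l * (\<Sum>s\<in>pairs. lyap_weight s * ?z s * ?E1 s)
      + ?l\<^sup>2 * (\<Sum>s\<in>pairs. lyap_weight s * ?E2 s)"
    by (simp add: sum.distrib sum_distrib_left[symmetric] sum_distrib_right[symmetric] sum_sel)
  also have "\<dots> \<le> lyap U + 2 * ?l * (- drift_gain * lyap U) + ?l\<^sup>2 * (K1 + K2 * lyap U)"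
    using lyap_first_order_le lyap_second_order_le[OF U] lr_nonneg
    by (intro add_mono order_refl mult_left_mono) auto
  finally show ?thesis
    by (simp add: algebra_simps)
qed

end

section \<open>Maximal inequality on stream space\<close>

lemma measurable_stake_pmf:
  fixes D :: "'x::countable pmf"
  shows "stake n \<in> measurable (stream_space (measure_pmf D)) (count_space UNIV)"
  using measurable_stake[where 'a='x, of n]
  by (simp add: measurable_cong_sets[OF sets_stream_space_cong])

lemma measurable_stake_borel:
  fixes D :: "'x::countable pmf" and H :: "'x list \<Rightarrow> 'b::topological_space"
  shows "(\<lambda>\<omega>. H (stake n \<omega>)) \<in> borel_measurable (stream_space (measure_pmf D))"
  using measurable_stake_pmf by (rule measurable_compose) simp

lemma sets_stream_space_stake:
  fixes D :: "'x::countable pmf"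
  shows "{\<omega>. P (stake n \<omega>)} \<in> sets (stream_space (measure_pmf D))"
  using measurable_sets[OF measurable_stake_pmf, of "{xs. P xs}" n D]
  by (simp add: space_stream_space vimage_def)

lemma emeasure_space_stream_space_pmf [simp]:
  fixes D :: "'x::countable pmf"
  shows "emeasure (stream_space (measure_pmf D)) (space (stream_space (measure_pmf D))) = 1"
  using prob_space.emeasure_space_1[OF prob_space.prob_space_stream_space[OF prob_space_measure_pmf]] .

lemma nn_integral_stream_space_stake_Suc:
  fixes D :: "'x::countable pmf" and F :: "'x list \<Rightarrow> ennreal"
  shows "(\<integral>\<^sup>+\<omega>. F (stake (Suc n) \<omega>) \<partial>stream_space (measure_pmf D))
    = (\<integral>\<^sup>+x. (\<integral>\<^sup>+\<omega>. F (x # stake n \<omega>) \<partial>stream_space (measure_pmf D)) \<partial>measure_pmf D)"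
  by (subst prob_space.nn_integral_stream_space[OF prob_space_measure_pmf])
    (auto intro: measurable_stake_borel)

primrec evolve :: "(nat \<Rightarrow> 's \<Rightarrow> 'x \<Rightarrow> 's) \<Rightarrow> nat \<Rightarrow> 's \<Rightarrow> 'x list \<Rightarrow> 's" where
  "evolve st i u [] = u"
| "evolve st i u (x # xs) = evolve st (Suc i) (st i u x) xs"

lemma evolve_snoc: "evolve st i u (xs @ [x]) = st (i + length xs) (evolve st i u xs) x"
  by (induction xs arbitrary: i u) auto

lemma evolve_invariant:
  "(\<And>i u x. I u \<Longrightarrow> I (st i u x)) \<Longrightarrow> I u \<Longrightarrow> I (evolve st i u xs)"
  by (induction xs arbitrary: i u) auto

lemma nn_integral_evolve_Suc:
  fixes D :: "'x::countable pmf" and f :: "'s \<Rightarrow> ennreal"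
  shows "(\<integral>\<^sup>+\<omega>. f (evolve st i u (stake (Suc n) \<omega>)) \<partial>stream_space (measure_pmf D))
    = (\<integral>\<^sup>+\<omega>. (\<integral>\<^sup>+x. f (st (i + n) (evolve st i u (stake n \<omega>)) x) \<partial>measure_pmf D)
        \<partial>stream_space (measure_pmf D))"
proof (induction n arbitrary: i u)
  case 0
  show ?case
    using nn_integral_stream_space_stake_Suc[where F="\<lambda>xs. f (evolve st i u xs)" and n=0 and D=D]
    by simp
next
  case (Suc n)
  have "(\<integral>\<^sup>+\<omega>. f (evolve st i u (stake (Suc (Suc n)) \<omega>)) \<partial>stream_space (measure_pmf D))
     = (\<integral>\<^sup>+x. (\<integral>\<^sup>+\<omega>. f (evolve st (Suc i) (st i u x) (stake (Suc n) \<omega>))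
          \<partial>stream_space (measure_pmf D)) \<partial>measure_pmf D)"
    using nn_integral_stream_space_stake_Suc[where F="\<lambda>xs. f (evolve st i u xs)" and n="Suc n" and D=D]
    by simp
  also have "\<dots> = (\<integral>\<^sup>+x. (\<integral>\<^sup>+\<omega>. (\<integral>\<^sup>+y. f (st (Suc i + n) (evolve st (Suc i) (st i u x) (stake n \<omega>)) y)
          \<partial>measure_pmf D) \<partial>stream_space (measure_pmf D)) \<partial>measure_pmf D)"
    by (simp only: Suc.IH)
  also have "\<dots> = (\<integral>\<^sup>+\<omega>. (\<integral>\<^sup>+y. f (st (i + Suc n) (evolve st i u (stake (Suc n) \<omega>)) y)
      \<partial>measure_pmf D) \<partial>stream_space (measure_pmf D))"
    using nn_integral_stream_space_stake_Suc[where n=n and D=D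
      and F="\<lambda>xs. \<integral>\<^sup>+y. f (st (i + Suc n) (evolve st i u xs) y) \<partial>measure_pmf D"]
    by simp
  finally show ?case .
qed


lemma exceeds_within_Cons:
  assumes "\<not> \<epsilon> \<le> Z i u"
  shows "(\<exists>k\<le>Suc m. \<epsilon> \<le> Z (i + k) (evolve st i u (take k (x # xs))))
    \<longleftrightarrow> (\<exists>k\<le>m. \<epsilon> \<le> Z (Suc i + k) (evolve st (Suc i) (st i u x) (take k xs)))"
proof
  assume "\<exists>k\<le>Suc m. \<epsilon> \<le> Z (i + k) (evolve st i u (take k (x # xs)))"
  then obtain k where k: "k \<le> Suc m" "\<epsilon> \<le> Z (i + k) (evolve st i u (take k (x # xs)))"
    by blast
  with assms obtain k' where "k = Suc k'"
    by (cases k) auto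
  with k show "\<exists>k\<le>m. \<epsilon> \<le> Z (Suc i + k) (evolve st (Suc i) (st i u x) (take k xs))"
    by (intro exI[of _ k']) auto
next
  assume "\<exists>k\<le>m. \<epsilon> \<le> Z (Suc i + k) (evolve st (Suc i) (st i u x) (take k xs))"
  then show "\<exists>k\<le>Suc m. \<epsilon> \<le> Z (i + k) (evolve st i u (take k (x # xs)))"
    by (metis Suc_le_mono add_Suc_shift evolve.simps(2) take_Suc_Cons)
qed

text \<open>Ville's maximal inequality for a nonnegative supermartingale driven by an i.i.d. input
  stream.\<close>

lemma maximal_ineq_from_start:
  fixes D :: "'x::countable pmf" and Z :: "nat \<Rightarrow> 's \<Rightarrow> ennreal"
  assumes inv: "\<And>i u x. I u \<Longrightarrow> I (st i u x)"
    and super: "\<And>i u. I u \<Longrightarrow> (\<integral>\<^sup>+x. Z (Suc i) (st i u x) \<partial>measure_pmf D) \<le> Z i u"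
  shows "I u \<Longrightarrow> \<epsilon> * (\<integral>\<^sup>+\<omega>. of_bool (\<exists>k\<le>m. \<epsilon> \<le> Z (i + k) (evolve st i u (take k (stake m \<omega>))))
    \<partial>stream_space (measure_pmf D)) \<le> Z i u"
proof (induction m arbitrary: i u)
  case 0
  then show ?case by auto
next
  case (Suc m)
  show ?case
  proof (cases "\<epsilon> \<le> Z i u")
    case True
    have "(\<integral>\<^sup>+\<omega>. of_bool (\<exists>k\<le>Suc m. \<epsilon> \<le> Z (i + k) (evolve st i u (take k (stake (Suc m) \<omega>))))
        \<partial>stream_space (measure_pmf D)) = (\<integral>\<^sup>+\<omega>. 1 \<partial>stream_space (measure_pmf D))"
      using True by (intro nn_integral_cong) (auto intro: exI[of _ 0])
    then show ?thesis
      using True by simp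
  next
    case False
    note shift = exceeds_within_Cons[where Z=Z, OF False]
    have "\<epsilon> * (\<integral>\<^sup>+\<omega>. of_bool (\<exists>k\<le>Suc m. \<epsilon> \<le> Z (i + k) (evolve st i u (take k (stake (Suc m) \<omega>))))
        \<partial>stream_space (measure_pmf D))
      = \<epsilon> * (\<integral>\<^sup>+x. (\<integral>\<^sup>+\<omega>. of_bool (\<exists>k\<le>m. \<epsilon> \<le> Z (Suc i + k) (evolve st (Suc i) (st i u x) (take k (stake m \<omega>))))
        \<partial>stream_space (measure_pmf D)) \<partial>measure_pmf D)"
      using nn_integral_stream_space_stake_Suc[where n=m and D=D
          and F="\<lambda>xs. of_bool (\<exists>k\<le>Suc m. \<epsilon> \<le> Z (i + k) (evolve st i u (take k xs)))"]
      by (simp only: shift)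
    also have "\<dots> = (\<integral>\<^sup>+x. \<epsilon> * (\<integral>\<^sup>+\<omega>. of_bool (\<exists>k\<le>m. \<epsilon> \<le> Z (Suc i + k) (evolve st (Suc i) (st i u x) (take k (stake m \<omega>))))
        \<partial>stream_space (measure_pmf D)) \<partial>measure_pmf D)"
      by (simp add: nn_integral_cmult)
    also have "\<dots> \<le> (\<integral>\<^sup>+x. Z (Suc i) (st i u x) \<partial>measure_pmf D)"
      by (intro nn_integral_mono Suc.IH inv Suc.prems)
    also have "\<dots> \<le> Z i u"
      using super Suc.prems by blast
    finally show ?thesis .
  qed
qed

lemma maximal_ineq_after:
  fixes D :: "'x::countable pmf" and Z :: "nat \<Rightarrow> 's \<Rightarrow> ennreal"
  assumes inv: "\<And>i u x. I u \<Longrightarrow> I (st i u x)"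
    and super: "\<And>i u. I u \<Longrightarrow> (\<integral>\<^sup>+x. Z (Suc i) (st i u x) \<partial>measure_pmf D) \<le> Z i u"
  shows "I u \<Longrightarrow> \<epsilon> * (\<integral>\<^sup>+\<omega>. of_bool (\<exists>k\<le>m. \<epsilon> \<le> Z (i + n + k) (evolve st i u (take (n + k) (stake (n + m) \<omega>))))
      \<partial>stream_space (measure_pmf D))
    \<le> (\<integral>\<^sup>+\<omega>. Z (i + n) (evolve st i u (stake n \<omega>)) \<partial>stream_space (measure_pmf D))"
proof (induction n arbitrary: i u)
  case 0
  then show ?case
    using maximal_ineq_from_start[where I=I and st=st and D=D and Z=Z, OF inv super] by simp
next
  case (Suc n)
  have "\<epsilon> * (\<integral>\<^sup>+\<omega>. of_bool (\<exists>k\<le>m. \<epsilon> \<le> Z (i + Suc n + k) (evolve st i u (take (Suc n + k) (stake (Suc n + m) \<omega>))))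
      \<partial>stream_space (measure_pmf D))
    = (\<integral>\<^sup>+x. \<epsilon> * (\<integral>\<^sup>+\<omega>. of_bool (\<exists>k\<le>m. \<epsilon> \<le> Z (Suc i + n + k)
        (evolve st (Suc i) (st i u x) (take (n + k) (stake (n + m) \<omega>)))) \<partial>stream_space (measure_pmf D))
      \<partial>measure_pmf D)"
    using nn_integral_stream_space_stake_Suc[where n="n + m" and D=D
        and F="\<lambda>xs. of_bool (\<exists>k\<le>m. \<epsilon> \<le> Z (i + Suc n + k) (evolve st i u (take (Suc n + k) xs)))"]
    by (simp add: nn_integral_cmult)
  also have "\<dots> \<le> (\<integral>\<^sup>+x. (\<integral>\<^sup>+\<omega>. Z (Suc i + n) (evolve st (Suc i) (st i u x) (stake n \<omega>))
      \<partial>stream_space (measure_pmf D)) \<partial>measure_pmf D)"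
    by (intro nn_integral_mono Suc.IH inv Suc.prems)
  also have "\<dots> = (\<integral>\<^sup>+\<omega>. Z (i + Suc n) (evolve st i u (stake (Suc n) \<omega>)) \<partial>stream_space (measure_pmf D))"
    using nn_integral_stream_space_stake_Suc[where F="\<lambda>xs. Z (i + Suc n) (evolve st i u xs)" and n=n and D=D]
    by simp
  finally show ?case .
qed

lemma supermartingale_maximal_ineq:
  fixes D :: "'x::countable pmf" and Z :: "nat \<Rightarrow> 's \<Rightarrow> ennreal"
  assumes inv: "\<And>i u x. I u \<Longrightarrow> I (st i u x)"
    and super: "\<And>i u. I u \<Longrightarrow> (\<integral>\<^sup>+x. Z (Suc i) (st i u x) \<partial>measure_pmf D) \<le> Z i u"
    and "I u"
  shows "\<epsilon> * emeasure (stream_space (measure_pmf D)) {\<omega>. \<exists>k\<le>m. \<epsilon> \<le> Z (n + k) (evolve st 0 u (stake (n + k) \<omega>))}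
    \<le> (\<integral>\<^sup>+\<omega>. Z n (evolve st 0 u (stake n \<omega>)) \<partial>stream_space (measure_pmf D))"
proof -
  let ?A = "{\<omega>. \<exists>k\<le>m. \<epsilon> \<le> Z (n + k) (evolve st 0 u (stake (n + k) \<omega>))}"
  have A: "?A = {\<omega>. (\<lambda>xs. \<exists>k\<le>m. \<epsilon> \<le> Z (n + k) (evolve st 0 u (take (n + k) xs))) (stake (n + m) \<omega>)}"
    by (auto simp: take_stake min_def)
  have "?A \<in> sets (stream_space (measure_pmf D))"
    unfolding A by (rule sets_stream_space_stake)
  then have "emeasure (stream_space (measure_pmf D)) ?A = (\<integral>\<^sup>+\<omega>. indicator ?A \<omega> \<partial>stream_space (measure_pmf D))"
    by simp
  also have "\<dots> = (\<integral>\<^sup>+\<omega>. of_bool (\<exists>k\<le>m. \<epsilon> \<le> Z (0 + n + k) (evolve st 0 u (take (n + k) (stake (n + m) \<omega>))))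
      \<partial>stream_space (measure_pmf D))"
    by (intro nn_integral_cong) (auto simp: indicator_def take_stake min_def)
  finally show ?thesis
    using maximal_ineq_after[where I=I and st=st and D=D and Z=Z, OF inv super \<open>I u\<close>, of \<epsilon> m 0 n]
    by simp
qed

section \<open>Deterministic and almost sure convergence\<close>

lemma prod_one_minus_le:
  fixes x :: "nat \<Rightarrow> real"
  assumes "\<And>k. 0 \<le> x k" "\<And>k. x k \<le> 1"
  shows "(\<Prod>k<n. 1 - x k) \<le> 1 / (1 + (\<Sum>k<n. x k))"
proof -
  have "(\<Prod>k<n. 1 - x k) \<le> (\<Prod>k<n. exp (- x k))"
  proof (rule prod_mono)
    show "0 \<le> 1 - x k \<and> 1 - x k \<le> exp (- x k)" for k
      using assms[of k] exp_ge_add_one_self[of "- x k"] by simp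
  qed
  also have "\<dots> = exp (- (\<Sum>k<n. x k))"
    by (simp add: exp_sum sum_negf[symmetric])
  also have "\<dots> \<le> 1 / (1 + (\<Sum>k<n. x k))"
  proof -
    have "0 \<le> (\<Sum>k<n. x k)"
      using assms by (intro sum_nonneg) auto
    moreover have "1 + (\<Sum>k<n. x k) \<le> exp (\<Sum>k<n. x k)"
      by simp
    ultimately show ?thesis
      by (simp add: exp_minus field_simps)
  qed
  finally show ?thesis .
qed

lemma unrolled_recursion_le:
  fixes e a b :: "nat \<Rightarrow> real"
  assumes a: "\<And>n. 0 \<le> a n" "\<And>n. a n \<le> 1" and b: "\<And>n. 0 \<le> b n"
    and rec: "\<And>n. e (Suc n) \<le> (1 - a n) * e n + b n"
  shows "e (M + n) \<le> (\<Prod>k<n. 1 - a (M + k)) * e M + (\<Sum>k<n. b (M + k))"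
proof (induction n)
  case (Suc n)
  let ?P = "\<Prod>k<n. 1 - a (M + k)" and ?S = "\<Sum>k<n. b (M + k)"
  have "e (M + Suc n) \<le> (1 - a (M + n)) * (?P * e M + ?S) + b (M + n)"
    using rec[of "M + n"] Suc.IH a[of "M + n"] by (simp add: order_trans mult_left_mono)
  also have "\<dots> \<le> (1 - a (M + n)) * ?P * e M + ?S + b (M + n)"
    using a[of "M + n"] b by (simp add: algebra_simps mult_left_le_one_le sum_nonneg)
  finally show ?case
    by (simp add: algebra_simps)
qed simp

lemma prod_one_minus_tendsto_zero:
  fixes a :: "nat \<Rightarrow> real"
  assumes a: "\<And>n. 0 \<le> a n" "\<And>n. a n \<le> 1" "\<not> summable a"
  shows "(\<lambda>n. \<Prod>k<n. 1 - a k) \<longlonglongrightarrow> 0"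
proof (rule order_tendstoI)
  fix \<epsilon> :: real assume \<epsilon>: "0 < \<epsilon>"
  obtain N where N: "1 / \<epsilon> < (\<Sum>k<N. a k)"
  proof (rule ccontr)
    assume "\<not> thesis"
    then have "(\<Sum>k<n. a k) \<le> 1 / \<epsilon>" for n
      using that by (meson not_less)
    then have "summable a"
      using a(1) by (intro summableI_nonneg_bounded) auto
    then show False
      using a(3) by simp
  qed
  have "(\<Prod>k<n. 1 - a k) < \<epsilon>" if "N \<le> n" for n
  proof -
    have "1 / \<epsilon> < (\<Sum>k<n. a k)"
      using N sum_mono2[of "{..<n}" "{..<N}" a] that a(1) by fastforce
    then have "1 < \<epsilon> * (1 + (\<Sum>k<n. a k))"
      using \<epsilon> by (simp add: field_simps)
    moreover have "0 < 1 + (\<Sum>k<n. a k)"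
      using a(1) by (simp add: sum_nonneg add_pos_nonneg)
    ultimately have "1 / (1 + (\<Sum>k<n. a k)) < \<epsilon>"
      by (simp add: divide_less_eq mult.commute)
    then show ?thesis
      using prod_one_minus_le[of a n, OF a(1,2)] by linarith
  qed
  then show "eventually (\<lambda>n. (\<Prod>k<n. 1 - a k) < \<epsilon>) sequentially"
    unfolding eventually_sequentially by blast
next
  fix y :: real assume "y < 0"
  then show "eventually (\<lambda>n. y < (\<Prod>k<n. 1 - a k)) sequentially"
    using a by (intro always_eventually allI) (simp add: prod_nonneg less_le_trans)
qed

lemma contracting_recursion_tendsto_zero:
  fixes e a b :: "nat \<Rightarrow> real"
  assumes a: "\<And>n. 0 \<le> a n" "\<And>n. a n \<le> 1" "\<not> summable a"
    and b: "\<And>n. 0 \<le> b n" "summable b"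
    and e: "\<And>n. 0 \<le> e n" "\<And>n. e (Suc n) \<le> (1 - a n) * e n + b n"
  shows "e \<longlonglongrightarrow> 0"
proof (rule order_tendstoI)
  fix \<epsilon> :: real assume \<epsilon>: "0 < \<epsilon>"
  obtain M where M: "norm (\<Sum>i. b (i + M)) < \<epsilon> / 2"
    using suminf_exist_split[OF _ b(2), of "\<epsilon> / 2"] \<epsilon> by auto
  have tail: "(\<Sum>k<n. b (M + k)) < \<epsilon> / 2" for n
  proof -
    have "summable (\<lambda>i. b (i + M))"
      using b(2) by (rule summable_ignore_initial_segment)
    then have "(\<Sum>k<n. b (M + k)) \<le> (\<Sum>i. b (i + M))"
      using sum_le_suminf[of "\<lambda>i. b (i + M)" "{..<n}"] b(1) by (simp add: add.commute)
    then show ?thesis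
      using M by simp
  qed
  have "(\<lambda>n. (\<Prod>k<n. 1 - a (M + k)) * e M) \<longlonglongrightarrow> 0"
    using a by (intro tendsto_mult_left_zero prod_one_minus_tendsto_zero)
      (simp_all add: add.commute[of M])
  then have "eventually (\<lambda>n. (\<Prod>k<n. 1 - a (M + k)) * e M < \<epsilon> / 2) sequentially"
    using \<epsilon> by (intro order_tendstoD(2)) auto
  then have "eventually (\<lambda>n. e (n + M) < \<epsilon>) sequentially"
  proof (rule eventually_mono)
    fix n assume "(\<Prod>k<n. 1 - a (M + k)) * e M < \<epsilon> / 2"
    then show "e (n + M) < \<epsilon>"
      using unrolled_recursion_le[where e=e and a=a and b=b, OF a(1,2) b(1) e(2), of M n] tail[of n]
      by (simp add: add.commute)
  qed
  then show "eventually (\<lambda>n. e n < \<epsilon>) sequentially"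
    by (rule eventually_sequentially_seg[THEN iffD1])
next
  fix y :: real assume "y < 0"
  then show "eventually (\<lambda>n. y < e n) sequentially"
    using e(1) by (auto intro: always_eventually less_le_trans)
qed

lemma null_sets_eventual_exceedance:
  fixes Z :: "nat \<Rightarrow> 'a \<Rightarrow> real" and g :: "nat \<Rightarrow> real"
  assumes sets: "\<And>n m. {\<omega> \<in> space M. \<exists>k\<le>m. \<eta> \<le> Z (n + k) \<omega>} \<in> sets M"
    and bound: "\<And>n m. ennreal \<eta> * emeasure M {\<omega> \<in> space M. \<exists>k\<le>m. \<eta> \<le> Z (n + k) \<omega>} \<le> ennreal (g n)"
    and g: "g \<longlonglongrightarrow> 0" and \<eta>: "0 < \<eta>"
  shows "(\<Inter>n. \<Union>m. {\<omega> \<in> space M. \<exists>k\<le>m. \<eta> \<le> Z (n + k) \<omega>}) \<in> null_sets M"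
proof -
  define A where "A n m = {\<omega> \<in> space M. \<exists>k\<le>m. \<eta> \<le> Z (n + k) \<omega>}" for n m
  have A: "A n m \<in> sets M" for n m
    unfolding A_def by (rule sets)
  have UA: "(\<Union>m. A n m) \<in> sets M" for n
    using A by (intro sets.countable_UN) auto
  have inc: "incseq (A n)" for n
    unfolding incseq_def A_def using le_trans by blast
  have "ennreal \<eta> * emeasure M (\<Inter>n. \<Union>m. A n m) \<le> ennreal (g n)" for n
  proof -
    have "(\<Inter>n. \<Union>m. A n m) \<subseteq> (\<Union>m. A n m)"
      by blast
    then have "ennreal \<eta> * emeasure M (\<Inter>n. \<Union>m. A n m) \<le> ennreal \<eta> * emeasure M (\<Union>m. A n m)"
      by (intro mult_left_mono emeasure_mono UA) auto
    also have "emeasure M (\<Union>m. A n m) = (SUP m. emeasure M (A n m))"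
      using A inc by (intro SUP_emeasure_incseq[symmetric]) auto
    also have "ennreal \<eta> * \<dots> = (SUP m. ennreal \<eta> * emeasure M (A n m))"
      by (simp add: SUP_mult_left_ennreal)
    also have "\<dots> \<le> ennreal (g n)"
      using bound unfolding A_def by (rule SUP_least)
    finally show ?thesis .
  qed
  then have "ennreal \<eta> * emeasure M (\<Inter>n. \<Union>m. A n m) \<le> ennreal 0"
    using tendsto_ennrealI[OF g] by (intro LIMSEQ_le_const) auto
  moreover have "(\<Inter>n. \<Union>m. A n m) \<in> sets M"
    using UA by (intro sets.countable_INT) auto
  ultimately have "(\<Inter>n. \<Union>m. A n m) \<in> null_sets M"
    using \<eta> by (simp add: null_sets_def ennreal_eq_0_iff)
  then show ?thesis
    unfolding A_def .
qed

lemma AE_tendsto_zero_of_maximal_bound: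
  fixes Z :: "nat \<Rightarrow> 'a \<Rightarrow> real" and g :: "nat \<Rightarrow> real"
  assumes Z: "\<And>n \<omega>. 0 \<le> Z n \<omega>"
    and sets: "\<And>\<eta> n m. {\<omega> \<in> space M. \<exists>k\<le>m. \<eta> \<le> Z (n + k) \<omega>} \<in> sets M"
    and bound: "\<And>\<eta> n m. 0 < \<eta> \<Longrightarrow>
      ennreal \<eta> * emeasure M {\<omega> \<in> space M. \<exists>k\<le>m. \<eta> \<le> Z (n + k) \<omega>} \<le> ennreal (g n)"
    and g: "g \<longlonglongrightarrow> 0"
  shows "AE \<omega> in M. (\<lambda>n. Z n \<omega>) \<longlonglongrightarrow> 0"
proof -
  define E where "E \<eta> n m = {\<omega> \<in> space M. \<exists>k\<le>m. \<eta> \<le> Z (n + k) \<omega>}" for \<eta> n m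
  define N where "N \<eta> = (\<Inter>n. \<Union>m. E \<eta> n m)" for \<eta>
  have null: "N \<eta> \<in> null_sets M" if "0 < \<eta>" for \<eta>
    unfolding N_def E_def using sets bound[OF that] g that by (rule null_sets_eventual_exceedance)
  show ?thesis
  proof (rule AE_I'[of "\<Union>j. N (1 / Suc j)"])
    show "(\<Union>j. N (1 / Suc j)) \<in> null_sets M"
      using null by (intro null_sets_UN) simp
    show "{\<omega> \<in> space M. \<not> (\<lambda>n. Z n \<omega>) \<longlonglongrightarrow> 0} \<subseteq> (\<Union>j. N (1 / Suc j))"
    proof (intro subsetI, rule ccontr)
      fix \<omega> assume \<omega>: "\<omega> \<in> {\<omega> \<in> space M. \<not> (\<lambda>n. Z n \<omega>) \<longlonglongrightarrow> 0}"
        and out: "\<omega> \<notin> (\<Union>j. N (1 / Suc j))"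
      have small: "\<exists>n. \<forall>k\<ge>n. Z k \<omega> < 1 / Suc j" for j
      proof -
        have "\<omega> \<notin> N (1 / Suc j)"
          using out by blast
        then obtain n where n: "\<omega> \<notin> E (1 / Suc j) n m" for m
          unfolding N_def by blast
        have "\<not> 1 / Suc j \<le> Z (n + k) \<omega>" for k
          using n[of k] \<omega> unfolding E_def by blast
        then have "Z (n + (k - n)) \<omega> < 1 / Suc j" for k
          by (simp add: not_le)
        then have "Z k \<omega> < 1 / Suc j" if "n \<le> k" for k
          using that le_add_diff_inverse[OF that] by (metis (no_types))
        then show ?thesis by blast
      qed
      have "(\<lambda>n. Z n \<omega>) \<longlonglongrightarrow> 0"
      proof (rule LIMSEQ_I)
        fix r :: real assume "0 < r"
        then obtain j where "inverse (real (Suc j)) < r"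
          using reals_Archimedean by blast
        then have j: "1 / Suc j < r"
          by (simp add: inverse_eq_divide)
        obtain n where "\<forall>k\<ge>n. Z k \<omega> < 1 / Suc j"
          using small by blast
        then have "\<forall>k\<ge>n. norm (Z k \<omega> - 0) < r"
          using j Z by (auto simp: abs_of_nonneg intro: less_trans)
        then show "\<exists>n. \<forall>k\<ge>n. norm (Z k \<omega> - 0) < r" ..
      qed
      then show False
        using \<omega> by simp
    qed
  qed
qed

section \<open>Convergence of Q-learning\<close>

context bmdp_qlearning
begin

abbreviation "runs \<equiv> stream_space (measure_pmf (step_dist p sel))"

definition greedy_process :: "('q \<times> 'a \<Rightarrow> real) \<Rightarrow> (('q \<times> 'a) \<times> 'q list) stream \<Rightarrow> nat \<Rightarrow> 'q \<times> 'a \<Rightarrow> real" where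
  "greedy_process U \<omega> n = evolve greedy_step 0 U (stake n \<omega>)"

definition nonneg_on_pairs :: "('q \<times> 'a \<Rightarrow> real) \<Rightarrow> bool" where
  "nonneg_on_pairs U \<longleftrightarrow> (\<forall>t\<in>pairs. 0 \<le> U t)"

lemma nonneg_on_pairs_greedy_step: "nonneg_on_pairs U \<Longrightarrow> nonneg_on_pairs (greedy_step i U x)"
  unfolding nonneg_on_pairs_def
proof (intro ballI)
  fix t assume U: "\<forall>t\<in>pairs. 0 \<le> U t" and t: "t \<in> pairs"
  show "0 \<le> greedy_step i U x t"
  proof (cases "t = fst x")
    case True
    have "greedy_step i U x t = (1 - lr i) * U t + lr i * (c (fst t) (snd t) + (\<Sum>y\<leftarrow>snd x. U (y, greedy y)))"
      unfolding greedy_step_def td_error_def using True by (simp add: algebra_simps)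
    moreover have "0 \<le> c (fst t) (snd t) + (\<Sum>y\<leftarrow>snd x. U (y, greedy y))"
      using U cost_pos'[OF t] by (intro add_nonneg_nonneg sum_list_map_nonneg) auto
    ultimately show ?thesis
      using U t lr_nonneg[of i] lr_le_1[of i] by simp
  qed (simp add: greedy_step_def U t)
qed

lemma greedy_process_Suc:
  "greedy_process U \<omega> (Suc n) = greedy_step n (greedy_process U \<omega> n) (\<omega> !! n)"
  unfolding greedy_process_def by (simp add: stake_Suc evolve_snoc del: stake.simps)

lemma qlearn_le_greedy_process:
  assumes "s \<in> pairs"
  shows "qlearn Act c lr Q0 \<omega> n s \<le> greedy_process Q0 \<omega> n s"
  using assms
proof (induction n arbitrary: s)
  case 0
  then show ?case by (simp add: greedy_process_def)
next
  case (Suc n)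
  define Q where "Q = qlearn Act c lr Q0 \<omega> n"
  define U where "U = greedy_process Q0 \<omega> n"
  obtain s' \<beta> where \<omega>n: "\<omega> !! n = (s', \<beta>)"
    by (cases "\<omega> !! n")
  have QU: "Q t \<le> U t" if "t \<in> pairs" for t
    unfolding Q_def U_def using Suc.IH that by blast
  have children: "(\<Sum>j<length \<beta>. Min ((\<lambda>a'. Q (\<beta> ! j, a')) ` Act (\<beta> ! j))) \<le> (\<Sum>x\<leftarrow>\<beta>. U (x, greedy x))"
  proof -
    have "Min ((\<lambda>a'. Q (\<beta> ! j, a')) ` Act (\<beta> ! j)) \<le> U (\<beta> ! j, greedy (\<beta> ! j))" for j
    proof -
      have "Min ((\<lambda>a'. Q (\<beta> ! j, a')) ` Act (\<beta> ! j)) \<le> Q (\<beta> ! j, greedy (\<beta> ! j))"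
        by (intro Min_le) auto
      also have "\<dots> \<le> U (\<beta> ! j, greedy (\<beta> ! j))"
        by (rule QU) simp
      finally show ?thesis .
    qed
    then show ?thesis
      by (simp add: sum_list_sum_nth atLeast0LessThan sum_mono)
  qed
  have "(1 - lr n) * Q s' + lr n * (c (fst s') (snd s') + (\<Sum>j<length \<beta>. Min ((\<lambda>a'. Q (\<beta> ! j, a')) ` Act (\<beta> ! j))))
      \<le> (1 - lr n) * U s' + lr n * (c (fst s') (snd s') + (\<Sum>x\<leftarrow>\<beta>. U (x, greedy x)))"
    if "s' \<in> pairs"
    using QU[OF that] children lr_nonneg[of n] lr_le_1[of n] by (intro add_mono mult_left_mono) auto
  then show ?case
    using QU[OF Suc.prems] Suc.prems \<omega>n
    by (auto simp: Q_def[symmetric] U_def[symmetric] greedy_process_Suc greedy_step_def td_error_def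
        Let_def algebra_simps)
qed

lemma nn_integral_lyap_greedy_step_le:
  assumes "nonneg_on_pairs U"
  shows "(\<integral>\<^sup>+x. ennreal (lyap (greedy_step i U x)) \<partial>measure_pmf (step_dist p sel))
    \<le> ennreal ((1 - 2 * drift_gain * lr i + K2 * (lr i)\<^sup>2) * lyap U + K1 * (lr i)\<^sup>2)"
  using assms lyap_drift[of U i] unfolding nonneg_on_pairs_def
  by (simp add: nn_integral_step_dist lyap_nonneg ennreal_leI)

definition expected_lyap :: "('q \<times> 'a \<Rightarrow> real) \<Rightarrow> nat \<Rightarrow> ennreal" where
  "expected_lyap U n = (\<integral>\<^sup>+\<omega>. ennreal (lyap (greedy_process U \<omega> n)) \<partial>runs)"

lemma expected_lyap_Suc:
  assumes "nonneg_on_pairs U"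
  shows "expected_lyap U (Suc n)
    \<le> ennreal (max (1 - 2 * drift_gain * lr n + K2 * (lr n)\<^sup>2) 0) * expected_lyap U n + ennreal (K1 * (lr n)\<^sup>2)"
proof -
  let ?a = "max (1 - 2 * drift_gain * lr n + K2 * (lr n)\<^sup>2) 0"
  have "expected_lyap U (Suc n) = (\<integral>\<^sup>+\<omega>. (\<integral>\<^sup>+x. ennreal (lyap (greedy_step n (greedy_process U \<omega> n) x))
      \<partial>measure_pmf (step_dist p sel)) \<partial>runs)"
    unfolding expected_lyap_def greedy_process_def
    using nn_integral_evolve_Suc[where f="\<lambda>u. ennreal (lyap u)" and st=greedy_step and i=0
        and D="step_dist p sel"]
    by (simp only: add_0)
  also have "\<dots> \<le> (\<integral>\<^sup>+\<omega>. ennreal ?a * ennreal (lyap (greedy_process U \<omega> n)) + ennreal (K1 * (lr n)\<^sup>2) \<partial>runs)"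
  proof (intro nn_integral_mono)
    fix \<omega>
    let ?u = "greedy_process U \<omega> n"
    have "nonneg_on_pairs ?u"
      unfolding greedy_process_def
      by (intro evolve_invariant[where I=nonneg_on_pairs] nonneg_on_pairs_greedy_step assms)
    then have "(\<integral>\<^sup>+x. ennreal (lyap (greedy_step n ?u x)) \<partial>measure_pmf (step_dist p sel))
        \<le> ennreal ((1 - 2 * drift_gain * lr n + K2 * (lr n)\<^sup>2) * lyap ?u + K1 * (lr n)\<^sup>2)"
      by (rule nn_integral_lyap_greedy_step_le)
    also have "\<dots> \<le> ennreal (?a * lyap ?u + K1 * (lr n)\<^sup>2)"
      using lyap_nonneg[of ?u] by (intro ennreal_leI add_right_mono mult_right_mono) auto
    also have "\<dots> = ennreal ?a * ennreal (lyap ?u) + ennreal (K1 * (lr n)\<^sup>2)"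
      using lyap_nonneg[of ?u] K1_nonneg by (simp add: ennreal_plus ennreal_mult)
    finally show "(\<integral>\<^sup>+x. ennreal (lyap (greedy_step n ?u x)) \<partial>measure_pmf (step_dist p sel))
        \<le> ennreal ?a * ennreal (lyap ?u) + ennreal (K1 * (lr n)\<^sup>2)" .
  qed
  also have "\<dots> = ennreal ?a * expected_lyap U n + ennreal (K1 * (lr n)\<^sup>2)"
    unfolding expected_lyap_def greedy_process_def
    by (subst nn_integral_add) (auto simp: nn_integral_cmult measurable_stake_borel
        intro: measurable_compose[OF _ borel_measurable_times_ennreal])
  finally show ?thesis .
qed

lemma expected_lyap_finite: "nonneg_on_pairs U \<Longrightarrow> expected_lyap U n < \<top>"
proof (induction n)
  case 0
  then show ?case by (simp add: expected_lyap_def greedy_process_def)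
next
  case (Suc n)
  then show ?case
    using expected_lyap_Suc[OF Suc.prems, of n]
    by (auto simp: ennreal_mult_less_top order.strict_trans1)
qed

lemma lr_eventually_small:
  obtains N where "\<And>n. N \<le> n \<Longrightarrow> drift_gain * lr n \<le> 1 \<and> K2 * lr n \<le> drift_gain"
proof -
  have "(\<lambda>n. (lr n)\<^sup>2) \<longlonglongrightarrow> 0"
    using lr_square_summable by (rule summable_LIMSEQ_zero)
  then have "lr \<longlonglongrightarrow> 0"
    using tendsto_real_sqrt[of "\<lambda>n. (lr n)\<^sup>2" 0] lr_nonneg by simp
  moreover have "0 < min (1 / drift_gain) (drift_gain / (K2 + 1))"
    using drift_gain_pos K2_nonneg by simp
  ultimately have "eventually (\<lambda>n. lr n < min (1 / drift_gain) (drift_gain / (K2 + 1))) sequentially"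
    by (rule order_tendstoD(2))
  then obtain N where N: "\<And>n. N \<le> n \<Longrightarrow> lr n < min (1 / drift_gain) (drift_gain / (K2 + 1))"
    unfolding eventually_sequentially by blast
  have "drift_gain * lr n \<le> 1 \<and> K2 * lr n \<le> drift_gain" if "N \<le> n" for n
  proof
    show "drift_gain * lr n \<le> 1"
      using N[OF that] drift_gain_pos by (simp add: field_simps)
    have "K2 * lr n \<le> (K2 + 1) * lr n"
      using lr_nonneg[of n] by (simp add: algebra_simps)
    also have "\<dots> \<le> drift_gain"
      using N[OF that] K2_nonneg by (simp add: field_simps)
    finally show "K2 * lr n \<le> drift_gain" .
  qed
  then show ?thesis
    using that by blast
qed

lemma expected_lyap_contracting:
  assumes U: "nonneg_on_pairs U" and l: "drift_gain * lr n \<le> 1" "K2 * lr n \<le> drift_gain"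
  shows "enn2real (expected_lyap U (Suc n))
    \<le> (1 - drift_gain * lr n) * enn2real (expected_lyap U n) + K1 * (lr n)\<^sup>2"
proof -
  define E where "E n = enn2real (expected_lyap U n)" for n
  have E_eq: "expected_lyap U n = ennreal (E n)" for n
    unfolding E_def using expected_lyap_finite[OF U, of n] by (simp add: ennreal_enn2real_if)
  have "K2 * lr n * lr n \<le> drift_gain * lr n"
    using l lr_nonneg[of n] by (intro mult_right_mono) auto
  then have "1 - 2 * drift_gain * lr n + K2 * (lr n)\<^sup>2 \<le> 1 - drift_gain * lr n"
    by (simp add: power2_eq_square algebra_simps)
  then have A: "max (1 - 2 * drift_gain * lr n + K2 * (lr n)\<^sup>2) 0 \<le> 1 - drift_gain * lr n"
    using l by simp
  have "ennreal (E (Suc n))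
      \<le> ennreal (max (1 - 2 * drift_gain * lr n + K2 * (lr n)\<^sup>2) 0) * ennreal (E n) + ennreal (K1 * (lr n)\<^sup>2)"
    using expected_lyap_Suc[OF U, of n] unfolding E_eq .
  also have "\<dots> \<le> ennreal (1 - drift_gain * lr n) * ennreal (E n) + ennreal (K1 * (lr n)\<^sup>2)"
    using A by (intro add_right_mono mult_right_mono ennreal_leI) auto
  also have "\<dots> = ennreal ((1 - drift_gain * lr n) * E n + K1 * (lr n)\<^sup>2)"
    using l K1_nonneg by (simp add: ennreal_mult ennreal_plus E_def)
  finally have "ennreal (E (Suc n)) \<le> ennreal ((1 - drift_gain * lr n) * E n + K1 * (lr n)\<^sup>2)" .
  moreover have "0 \<le> (1 - drift_gain * lr n) * E n + K1 * (lr n)\<^sup>2"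
    using l K1_nonneg by (simp add: E_def)
  ultimately show ?thesis
    unfolding E_def using ennreal_le_iff by blast
qed

lemma expected_lyap_tendsto_zero:
  assumes U: "nonneg_on_pairs U"
  shows "(\<lambda>n. enn2real (expected_lyap U n)) \<longlonglongrightarrow> 0"
proof -
  obtain N where N: "\<And>n. N \<le> n \<Longrightarrow> drift_gain * lr n \<le> 1 \<and> K2 * lr n \<le> drift_gain"
    using lr_eventually_small by blast
  have "(\<lambda>n. enn2real (expected_lyap U (n + N))) \<longlonglongrightarrow> 0"
  proof (intro contracting_recursion_tendsto_zero[where a="\<lambda>n. drift_gain * lr (n + N)"
        and b="\<lambda>n. K1 * (lr (n + N))\<^sup>2"])
    show "\<not> summable (\<lambda>n. drift_gain * lr (n + N))"
      using lr_not_summable drift_gain_pos by (simp add: summable_cmult_iff)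
    show "summable (\<lambda>n. K1 * (lr (n + N))\<^sup>2)"
      using summable_ignore_initial_segment[OF lr_square_summable, of N] by (rule summable_mult)
    show "0 \<le> drift_gain * lr (n + N)" "drift_gain * lr (n + N) \<le> 1" for n
      using N[of "n + N"] lr_nonneg[of "n + N"] drift_gain_pos by simp_all
    show "0 \<le> K1 * (lr (n + N))\<^sup>2" "0 \<le> enn2real (expected_lyap U (n + N))" for n
      using K1_nonneg by simp_all
    show "enn2real (expected_lyap U (Suc n + N))
        \<le> (1 - drift_gain * lr (n + N)) * enn2real (expected_lyap U (n + N)) + K1 * (lr (n + N))\<^sup>2" for n
      using expected_lyap_contracting[OF U, of "n + N"] N[of "n + N"] by simp
  qed
  then show ?thesis
    by (rule LIMSEQ_offset)
qed

definition lyap_scale :: "nat \<Rightarrow> real" where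
  "lyap_scale i = (\<Prod>k<i. 1 + K2 * (lr k)\<^sup>2)"

definition noise_tail :: "nat \<Rightarrow> real" where
  "noise_tail i = (\<Sum>k. K1 * (lr (k + i))\<^sup>2)"

text \<open>Rescaling the Lyapunov function and adding the remaining noise budget turns the
  drift inequality into a nonnegative supermartingale.\<close>

definition lyap_supermart :: "nat \<Rightarrow> ('q \<times> 'a \<Rightarrow> real) \<Rightarrow> real" where
  "lyap_supermart i U = lyap U / lyap_scale i + noise_tail i"

lemma lyap_scale_ge_1: "1 \<le> lyap_scale i"
  unfolding lyap_scale_def using K2_nonneg by (intro prod_ge_1) auto

lemma lyap_scale_le: "lyap_scale i \<le> exp (K2 * (\<Sum>k. (lr k)\<^sup>2))"
proof -
  have "lyap_scale i \<le> (\<Prod>k<i. exp (K2 * (lr k)\<^sup>2))"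
    unfolding lyap_scale_def using K2_nonneg by (intro prod_mono) (auto simp: add.commute)
  also have "\<dots> = exp (K2 * (\<Sum>k<i. (lr k)\<^sup>2))"
    by (simp add: exp_sum sum_distrib_left)
  also have "\<dots> \<le> exp (K2 * (\<Sum>k. (lr k)\<^sup>2))"
    using K2_nonneg lr_square_summable by (auto intro!: mult_left_mono sum_le_suminf)
  finally show ?thesis .
qed

lemma summable_noise: "summable (\<lambda>k. K1 * (lr (k + i))\<^sup>2)"
  using summable_ignore_initial_segment[OF lr_square_summable] by (rule summable_mult)

lemma noise_tail_nonneg: "0 \<le> noise_tail i"
  unfolding noise_tail_def using K1_nonneg by (intro suminf_nonneg summable_noise) auto

lemma noise_tail_Suc: "noise_tail i = K1 * (lr i)\<^sup>2 + noise_tail (Suc i)"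
  unfolding noise_tail_def using suminf_split_head[OF summable_noise] by simp

lemma noise_tail_tendsto_zero: "noise_tail \<longlonglongrightarrow> 0"
  unfolding noise_tail_def using suminf_exist_split2[of "\<lambda>k. K1 * (lr k)\<^sup>2"]
  by (simp add: summable_noise[where i=0, simplified])

lemma lyap_supermart_nonneg: "0 \<le> lyap_supermart i U"
  unfolding lyap_supermart_def using lyap_scale_ge_1[of i]
  by (intro add_nonneg_nonneg divide_nonneg_nonneg lyap_nonneg noise_tail_nonneg) auto

lemma lyap_supermart_step:
  assumes U: "nonneg_on_pairs U"
  shows "(\<integral>\<^sup>+x. ennreal (lyap_supermart (Suc i) (greedy_step i U x)) \<partial>measure_pmf (step_dist p sel))
    \<le> ennreal (lyap_supermart i U)"
proof -
  let ?r = "lyap_scale (Suc i)" and ?l = "lr i"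
  have r: "0 < lyap_scale i" "1 + K2 * ?l\<^sup>2 > 0"
    using lyap_scale_ge_1[of i] K2_nonneg by (simp_all add: add_pos_nonneg)
  have "(1 - 2 * drift_gain * ?l + K2 * ?l\<^sup>2) * lyap U \<le> (1 + K2 * ?l\<^sup>2) * lyap U"
    using drift_gain_pos lr_nonneg[of i] lyap_nonneg[of U] by (intro mult_right_mono) auto
  then have "step_expect (\<lambda>x. lyap (greedy_step i U x)) \<le> (1 + K2 * ?l\<^sup>2) * lyap U + K1 * ?l\<^sup>2"
    using lyap_drift[of U i] U unfolding nonneg_on_pairs_def by fastforce
  then have "(1 / ?r) * step_expect (\<lambda>x. lyap (greedy_step i U x))
      \<le> (1 / ?r) * ((1 + K2 * ?l\<^sup>2) * lyap U + K1 * ?l\<^sup>2)"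
    using lyap_scale_ge_1[of "Suc i"] by (intro mult_left_mono) auto
  also have "\<dots> = lyap U / lyap_scale i + K1 * ?l\<^sup>2 / ?r"
  proof -
    define B where "B = 1 + K2 * ?l\<^sup>2"
    have "?r = lyap_scale i * B"
      unfolding lyap_scale_def B_def by simp
    then show ?thesis
      using r unfolding B_def[symmetric] by (simp add: field_simps)
  qed
  also have "\<dots> \<le> lyap U / lyap_scale i + K1 * ?l\<^sup>2"
    using lyap_scale_ge_1[of "Suc i"] mult_nonneg_nonneg[OF K1_nonneg zero_le_power2[of ?l]]
    by (simp add: divide_le_eq mult_le_cancel_left1)
  finally have "(1 / ?r) * step_expect (\<lambda>x. lyap (greedy_step i U x)) + noise_tail (Suc i)
      \<le> lyap_supermart i U"
    unfolding lyap_supermart_def using noise_tail_Suc[of i] by simp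
  moreover have "(\<integral>\<^sup>+x. ennreal (lyap_supermart (Suc i) (greedy_step i U x)) \<partial>measure_pmf (step_dist p sel))
      = ennreal ((1 / ?r) * step_expect (\<lambda>x. lyap (greedy_step i U x)) + noise_tail (Suc i))"
  proof -
    have "step_expect (\<lambda>x. lyap_supermart (Suc i) (greedy_step i U x))
        = (1 / ?r) * step_expect (\<lambda>x. lyap (greedy_step i U x)) + noise_tail (Suc i)"
      using step_expect_affine[of "1 / ?r" "\<lambda>x. lyap (greedy_step i U x)" "noise_tail (Suc i)"]
      unfolding lyap_supermart_def by simp
    then show ?thesis
      using nn_integral_step_dist[OF lyap_supermart_nonneg] by simp
  qed
  ultimately show ?thesis
    by (simp add: ennreal_leI)
qed

lemma sets_lyap_supermart_exceedance:
  "{\<omega> \<in> space runs. \<exists>k\<le>m. \<eta> \<le> lyap_supermart (n + k) (greedy_process U \<omega> (n + k))} \<in> sets runs"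
proof -
  have "{\<omega> \<in> space runs. \<exists>k\<le>m. \<eta> \<le> lyap_supermart (n + k) (greedy_process U \<omega> (n + k))}
      = {\<omega>. (\<lambda>xs. \<exists>k\<le>m. \<eta> \<le> lyap_supermart (n + k) (evolve greedy_step 0 U (take (n + k) xs)))
          (stake (n + m) \<omega>)}"
    by (auto simp: space_stream_space greedy_process_def take_stake min_def)
  then show ?thesis
    using sets_stream_space_stake[of "\<lambda>xs. \<exists>k\<le>m. \<eta> \<le> lyap_supermart (n + k)
        (evolve greedy_step 0 U (take (n + k) xs))" "n + m" "step_dist p sel"]
    by simp
qed

lemma lyap_supermart_exceedance_le:
  assumes U: "nonneg_on_pairs U" and \<eta>: "0 < \<eta>"
  shows "ennreal \<eta> * emeasure runs
      {\<omega> \<in> space runs. \<exists>k\<le>m. \<eta> \<le> lyap_supermart (n + k) (greedy_process U \<omega> (n + k))}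
    \<le> ennreal (enn2real (expected_lyap U n) + noise_tail n)"
proof -
  let ?Z = "\<lambda>n \<omega>. lyap_supermart n (greedy_process U \<omega> n)"
  have "{\<omega> \<in> space runs. \<exists>k\<le>m. \<eta> \<le> ?Z (n + k) \<omega>}
      = {\<omega>. \<exists>k\<le>m. ennreal \<eta> \<le> ennreal (lyap_supermart (n + k) (evolve greedy_step 0 U (stake (n + k) \<omega>)))}"
    using \<eta> lyap_supermart_nonneg by (auto simp: space_stream_space greedy_process_def ennreal_le_iff)
  then have "ennreal \<eta> * emeasure runs {\<omega> \<in> space runs. \<exists>k\<le>m. \<eta> \<le> ?Z (n + k) \<omega>}
      \<le> (\<integral>\<^sup>+\<omega>. ennreal (?Z n \<omega>) \<partial>runs)"
    unfolding greedy_process_def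
    using supermartingale_maximal_ineq[where Z="\<lambda>i u. ennreal (lyap_supermart i u)" and st=greedy_step,
        OF nonneg_on_pairs_greedy_step lyap_supermart_step U]
    by simp
  also have "\<dots> \<le> (\<integral>\<^sup>+\<omega>. ennreal (lyap (greedy_process U \<omega> n)) + ennreal (noise_tail n) \<partial>runs)"
  proof (intro nn_integral_mono)
    fix \<omega>
    have "lyap (greedy_process U \<omega> n) / lyap_scale n \<le> lyap (greedy_process U \<omega> n)"
      using lyap_scale_ge_1[of n] lyap_nonneg[of "greedy_process U \<omega> n"]
      by (simp add: divide_le_eq mult_le_cancel_left1)
    then show "ennreal (?Z n \<omega>) \<le> ennreal (lyap (greedy_process U \<omega> n)) + ennreal (noise_tail n)"
      unfolding lyap_supermart_def using lyap_nonneg noise_tail_nonneg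
      by (simp add: ennreal_plus[symmetric] del: ennreal_plus)
  qed
  also have "\<dots> = expected_lyap U n + ennreal (noise_tail n)"
    unfolding expected_lyap_def greedy_process_def
    by (subst nn_integral_add) (auto simp: measurable_stake_borel)
  also have "\<dots> = ennreal (enn2real (expected_lyap U n) + noise_tail n)"
    using expected_lyap_finite[OF U, of n] noise_tail_nonneg[of n]
    by (simp add: ennreal_plus ennreal_enn2real_if)
  finally show ?thesis .
qed

lemma AE_lyap_greedy_process_tendsto_zero:
  assumes U: "nonneg_on_pairs U"
  shows "AE \<omega> in runs. (\<lambda>n. lyap (greedy_process U \<omega> n)) \<longlonglongrightarrow> 0"
proof -
  let ?Z = "\<lambda>n \<omega>. lyap_supermart n (greedy_process U \<omega> n)"
  have "AE \<omega> in runs. (\<lambda>n. ?Z n \<omega>) \<longlonglongrightarrow> 0"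
  proof (rule AE_tendsto_zero_of_maximal_bound[where g="\<lambda>n. enn2real (expected_lyap U n) + noise_tail n"])
    show "0 \<le> ?Z n \<omega>" for n \<omega>
      by (rule lyap_supermart_nonneg)
    show "{\<omega> \<in> space runs. \<exists>k\<le>m. \<eta> \<le> ?Z (n + k) \<omega>} \<in> sets runs" for \<eta> n m
      by (rule sets_lyap_supermart_exceedance)
    show "ennreal \<eta> * emeasure runs {\<omega> \<in> space runs. \<exists>k\<le>m. \<eta> \<le> ?Z (n + k) \<omega>}
        \<le> ennreal (enn2real (expected_lyap U n) + noise_tail n)" if "0 < \<eta>" for \<eta> n m
      using U that by (rule lyap_supermart_exceedance_le)
    show "(\<lambda>n. enn2real (expected_lyap U n) + noise_tail n) \<longlonglongrightarrow> 0"
      using tendsto_add[OF expected_lyap_tendsto_zero[OF U] noise_tail_tendsto_zero] by simp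
  qed
  then show ?thesis
  proof (rule eventually_mono)
    fix \<omega> assume Z: "(\<lambda>n. ?Z n \<omega>) \<longlonglongrightarrow> 0"
    let ?R = "exp (K2 * (\<Sum>k. (lr k)\<^sup>2))"
    have "norm (lyap (greedy_process U \<omega> n)) \<le> ?R * ?Z n \<omega>" for n
    proof -
      have "lyap (greedy_process U \<omega> n) = lyap_scale n * (lyap (greedy_process U \<omega> n) / lyap_scale n)"
        using lyap_scale_ge_1[of n] by simp
      also have "\<dots> \<le> ?R * ?Z n \<omega>"
        unfolding lyap_supermart_def using lyap_scale_le[of n] lyap_scale_ge_1[of n] lyap_nonneg noise_tail_nonneg
        by (intro mult_mono) auto
      finally show ?thesis
        using lyap_nonneg by simp
    qed
    then have "eventually (\<lambda>n. norm (lyap (greedy_process U \<omega> n)) \<le> ?R * ?Z n \<omega>) sequentially"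
      by (intro always_eventually) blast
    then show "(\<lambda>n. lyap (greedy_process U \<omega> n)) \<longlonglongrightarrow> 0"
      using tendsto_mult_right_zero[OF Z, of ?R] by (rule Lim_null_comparison)
  qed
qed

lemma limsup_le_Qlim:
  assumes V: "(\<lambda>n. lyap (U n)) \<longlonglongrightarrow> 0" and s: "s \<in> pairs"
  shows "limsup (\<lambda>n. ereal (U n s)) \<le> ereal (Qlim s)"
proof (rule ereal_le_epsilon2)
  fix \<delta> :: real assume \<delta>: "0 < \<delta>"
  have "eventually (\<lambda>n. lyap (U n) < lyap_coeff s * \<delta>\<^sup>2) sequentially"
    using order_tendstoD(2)[OF V] lyap_coeff_pos[OF s] \<delta> by simp
  then have "eventually (\<lambda>n. ereal (U n s) \<le> ereal (Qlim s + \<delta>)) sequentially"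
  proof (rule eventually_mono)
    fix n assume "lyap (U n) < lyap_coeff s * \<delta>\<^sup>2"
    then have "lyap_coeff s * (excess (U n) s)\<^sup>2 < lyap_coeff s * \<delta>\<^sup>2"
      using lyap_ge_excess[OF s, of "U n"] by linarith
    then have "(excess (U n) s)\<^sup>2 < \<delta>\<^sup>2"
      using lyap_coeff_pos[OF s] by simp
    then have "excess (U n) s < \<delta>"
      by (rule power_less_imp_less_base) (use \<delta> in simp)
    then show "ereal (U n s) \<le> ereal (Qlim s + \<delta>)"
      using excess_ge[of "U n" s] by simp
  qed
  then have "limsup (\<lambda>n. ereal (U n s)) \<le> ereal (Qlim s + \<delta>)"
    by (rule Limsup_bounded)
  then show "limsup (\<lambda>n. ereal (U n s)) \<le> ereal (Qlim s) + ereal \<delta>"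
    by simp
qed

lemma qlearn_limsup_le_Qstar:
  assumes Q0: "nonneg_on_pairs Q0"
  shows "AE \<omega> in runs. \<forall>q. \<forall>a\<in>Act q.
    limsup (\<lambda>i. ereal (qlearn Act c lr Q0 \<omega> i (q, a))) \<le> enn2ereal (Qstar Act p c q a)"
  using AE_lyap_greedy_process_tendsto_zero[OF Q0]
proof (rule eventually_mono, intro allI ballI)
  fix \<omega> q a
  assume lim: "(\<lambda>n. lyap (greedy_process Q0 \<omega> n)) \<longlonglongrightarrow> 0" and a: "a \<in> Act q"
  have "limsup (\<lambda>i. ereal (qlearn Act c lr Q0 \<omega> i (q, a)))
      \<le> limsup (\<lambda>i. ereal (greedy_process Q0 \<omega> i (q, a)))"
    using a by (intro Limsup_mono always_eventually) (simp add: qlearn_le_greedy_process)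
  also have "\<dots> \<le> ereal (Qlim (q, a))"
    using a by (intro limsup_le_Qlim[OF lim]) (simp add: pairs_def)
  also have "\<dots> \<le> enn2ereal (Qstar Act p c q a)"
  proof -
    have "0 \<le> Qlim (q, a)"
      using Qlim_pos[of "(q, a)"] a by (simp add: pairs_def)
    then have "ereal (Qlim (q, a)) = enn2ereal (ennreal (Qlim (q, a)))"
      by simp
    then show ?thesis
      using Qlim_le_Qstar[OF a] by (simp add: less_eq_ennreal.rep_eq[symmetric])
  qed
  finally show "limsup (\<lambda>i. ereal (qlearn Act c lr Q0 \<omega> i (q, a))) \<le> enn2ereal (Qstar Act p c q a)" .
qed

end

theorem lemma5:
  fixes Act :: "'q::finite \<Rightarrow> 'a::finite set"
    and p :: "'q \<Rightarrow> 'a \<Rightarrow> 'q list pmf"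
    and c :: "'q \<Rightarrow> 'a \<Rightarrow> real"
    and lr :: "nat \<Rightarrow> real"
    and sel :: "('q \<times> 'a) pmf"
    and pmin :: real
    and Q0 :: "'q \<times> 'a \<Rightarrow> real"
  assumes "bmdp Act p c"
    and "\<forall>q. \<forall>a\<in>Act q. Qstar Act p c q a < \<infinity>"
    and "\<forall>i. 0 \<le> lr i \<and> lr i \<le> 1"
    and "\<not> summable lr"
    and "summable (\<lambda>i. (lr i)\<^sup>2)"
    and "set_pmf sel \<subseteq> {(q, a). a \<in> Act q}"
    and "pmin > 0"
    and "\<forall>q. \<forall>a\<in>Act q. pmf sel (q, a) \<ge> pmin"
    and "\<forall>q. \<forall>a\<in>Act q. Q0 (q, a) \<ge> 0"
  shows "AE \<omega> in stream_space (measure_pmf (step_dist p sel)).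
           \<forall>q. \<forall>a\<in>Act q.
             limsup (\<lambda>i. ereal (qlearn Act c lr Q0 \<omega> i (q, a))) \<le> enn2ereal (Qstar Act p c q a)"
proof -
  interpret bmdp_qlearning Act p c sel pmin lr
    using assms by unfold_locales auto
  have "nonneg_on_pairs Q0"
    using assms(9) by (auto simp: nonneg_on_pairs_def pairs_def)
  then show ?thesis
    by (rule qlearn_limsup_le_Qstar)
qed

end
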